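(* Let $F$ be a field of characteristic $2$. Every separated symplectic quadratic space $(V,q,q')$ over $F$ decomposes as $(V,q,q')\simeq\varphi_{an}\perp\mu_1\perp\dots\perp\mu_n$ ($n\ge0$), where $\varphi_{an}$ is an anisotropic separated symplectic quadratic space which is uniquely determined up to isometry, and each $\mu_i$ is a one-dimensional metabolic separated symplectic quadratic space. Moreover, if $(V,q,q')$ is metabolic then $\varphi_{an}=0$.
   Context: A separated symplectic quadratic space over $F$ is a triple $(V,q,q')$ with $V$ a finite-dimensional $F$-vector space, $q$ a totally singular quadratic form on $V$ and $q'$ a totally singular quadratic form on $V^*$ (totally singular: $Q(\lambda x)=\lambda^2Q(x)$ and $Q(x+y)=Q(x)+Q(y)$). Isometry: a linear isomorphism $L\colon V_1\to V_2$ with $q_2\circ L=q_1$ and $q_1'\circ L^*=q_2'$. Orthogonal sum: $(V_1\oplus V_2,q_1\perp q_2,q_1'\perp q_2')$ with $(V_1\oplus V_2)^*=V_1^*\oplus V_2^*$. The space is isotropic if $q$ or $q'$ has a nonzero zero, anisotropic otherwise. It is metabolic if there is a subspace $U\subset V$ (any dimension) with $q(U)=0$ and $q'(U^o)=0$, where $U^o\subset V^*$ is the annihilator of $U$. $0$ denotes the space with $V=0$. *)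

theory Defs
  imports Main
begin

text \<open>Coordinate model: a finite-dimensional F-vector space of dimension n is F^n,
represented as functions nat => F vanishing from index n on. The dual space
(F^n)* is identified with F^n via the standard pairing.\<close>

type_synonym 'a vec = "nat \<Rightarrow> 'a"

text \<open>A separated symplectic quadratic space: (dimension, q on V, q' on V*).\<close>
type_synonym 'a ssqs = "nat \<times> ('a vec \<Rightarrow> 'a) \<times> ('a vec \<Rightarrow> 'a)"

definition vecs :: "nat \<Rightarrow> 'a::zero vec set" where
  "vecs n = {x. \<forall>i\<ge>n. x i = 0}"

definition smul :: "'a::times \<Rightarrow> 'a vec \<Rightarrow> 'a vec" where
  "smul c x = (\<lambda>i. c * x i)"

definition vadd :: "'a::plus vec \<Rightarrow> 'a vec \<Rightarrow> 'a vec" where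
  "vadd x y = (\<lambda>i. x i + y i)"

definition zvec :: "'a::zero vec" where
  "zvec = (\<lambda>_. 0)"

definition pairing :: "nat \<Rightarrow> 'a::comm_semiring_1 vec \<Rightarrow> 'a vec \<Rightarrow> 'a" where
  "pairing n f x = (\<Sum>i<n. f i * x i)"

definition unit_vec :: "nat \<Rightarrow> 'a::{zero,one} vec" where
  "unit_vec j = (\<lambda>i. if i = j then 1 else 0)"

definition totally_singular :: "nat \<Rightarrow> ('a::field vec \<Rightarrow> 'a) \<Rightarrow> bool" where
  "totally_singular n Q \<longleftrightarrow>
     (\<forall>c. \<forall>x\<in>vecs n. Q (smul c x) = c ^ 2 * Q x) \<and>
     (\<forall>x\<in>vecs n. \<forall>y\<in>vecs n. Q (vadd x y) = Q x + Q y)"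

definition is_ssqs :: "'a::field ssqs \<Rightarrow> bool" where
  "is_ssqs S = (case S of (n, q, q') \<Rightarrow> totally_singular n q \<and> totally_singular n q')"

definition dim :: "'a ssqs \<Rightarrow> nat" where
  "dim S = fst S"

definition linear_on :: "nat \<Rightarrow> ('a::field vec \<Rightarrow> 'a vec) \<Rightarrow> bool" where
  "linear_on n L \<longleftrightarrow>
     (\<forall>x\<in>vecs n. \<forall>y\<in>vecs n. L (vadd x y) = vadd (L x) (L y)) \<and>
     (\<forall>c. \<forall>x\<in>vecs n. L (smul c x) = smul c (L x))"

text \<open>Dual (transpose) map L^*: V2^* \<rightarrow> V1^*, g \<mapsto> g \<circ> L, in dual coordinates.\<close>
definition dual_map :: "nat \<Rightarrow> nat \<Rightarrow> ('a::field vec \<Rightarrow> 'a vec) \<Rightarrow> 'a vec \<Rightarrow> 'a vec" where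
  "dual_map n1 n2 L g = (\<lambda>j. if j < n1 then pairing n2 g (L (unit_vec j)) else 0)"

definition isometric :: "'a::field ssqs \<Rightarrow> 'a ssqs \<Rightarrow> bool" where
  "isometric S1 S2 = (case S1 of (n1, q1, q1') \<Rightarrow> case S2 of (n2, q2, q2') \<Rightarrow>
     (\<exists>L. linear_on n1 L \<and> bij_betw L (vecs n1) (vecs n2) \<and>
          (\<forall>x\<in>vecs n1. q2 (L x) = q1 x) \<and>
          (\<forall>g\<in>vecs n2. q1' (dual_map n1 n2 L g) = q2' g)))"

text \<open>Orthogonal sum: coordinates of V1 come first, then those of V2 (shifted).\<close>
definition first_part :: "nat \<Rightarrow> 'a::zero vec \<Rightarrow> 'a vec" where
  "first_part n1 x = (\<lambda>i. if i < n1 then x i else 0)"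

definition second_part :: "nat \<Rightarrow> 'a vec \<Rightarrow> 'a vec" where
  "second_part n1 x = (\<lambda>i. x (i + n1))"

definition orth_sum :: "'a::field ssqs \<Rightarrow> 'a ssqs \<Rightarrow> 'a ssqs" where
  "orth_sum S1 S2 = (case S1 of (n1, q1, q1') \<Rightarrow> case S2 of (n2, q2, q2') \<Rightarrow>
     (n1 + n2,
      \<lambda>x. q1 (first_part n1 x) + q2 (second_part n1 x),
      \<lambda>f. q1' (first_part n1 f) + q2' (second_part n1 f)))"

definition orth_sum_list :: "'a::field ssqs \<Rightarrow> 'a ssqs list \<Rightarrow> 'a ssqs" where
  "orth_sum_list S ms = foldl orth_sum S ms"

definition zero_space :: "'a::field ssqs" where
  "zero_space = (0, \<lambda>_. 0, \<lambda>_. 0)"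

definition isotropic :: "'a::field ssqs \<Rightarrow> bool" where
  "isotropic S = (case S of (n, q, q') \<Rightarrow>
     (\<exists>x\<in>vecs n. x \<noteq> zvec \<and> q x = 0) \<or> (\<exists>f\<in>vecs n. f \<noteq> zvec \<and> q' f = 0))"

definition anisotropic :: "'a::field ssqs \<Rightarrow> bool" where
  "anisotropic S \<longleftrightarrow> \<not> isotropic S"

definition subspace_of :: "nat \<Rightarrow> 'a::field vec set \<Rightarrow> bool" where
  "subspace_of n U \<longleftrightarrow> U \<subseteq> vecs n \<and> zvec \<in> U \<and>
     (\<forall>x\<in>U. \<forall>y\<in>U. vadd x y \<in> U) \<and> (\<forall>c. \<forall>x\<in>U. smul c x \<in> U)"

definition annihilator :: "nat \<Rightarrow> 'a::field vec set \<Rightarrow> 'a vec set" where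
  "annihilator n U = {f \<in> vecs n. \<forall>x\<in>U. pairing n f x = 0}"

definition metabolic :: "'a::field ssqs \<Rightarrow> bool" where
  "metabolic S = (case S of (n, q, q') \<Rightarrow>
     (\<exists>U. subspace_of n U \<and> (\<forall>x\<in>U. q x = 0) \<and> (\<forall>f\<in>annihilator n U. q' f = 0)))"

end

theory Submission
  imports Defs "HOL-Combinatorics.Transposition"
begin

text \<open>A totally singular form is additive, hence determined by its values on a basis, and its zero
  set is a subspace. If \<open>(V, q, q')\<close> is isotropic, a change of basis makes the last basis vector
  isotropic for \<open>q\<close> or the last dual basis vector isotropic for \<open>q'\<close>; the line it spans then splits
  off as a one-dimensional metabolic summand, and induction on the dimension gives the
  decomposition.

  For uniqueness let \<open>A \<subseteq> V\<close> be the annihilator of the zero set of \<open>q'\<close>. In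
  \<open>\<phi> \<perp> \<mu>\<^sub>1 \<perp> \<dots> \<perp> \<mu>\<^sub>k\<close> every line \<open>\<mu>\<^sub>i\<close> is killed by \<open>q\<close> or, on \<open>A\<close>, by its coordinate, so on \<open>A\<close>
  the form \<open>q\<close> is \<open>\<phi>\<close> evaluated on the projection to \<open>\<phi>\<close>; by the double annihilator theorem and the
  anisotropy of \<open>\<phi>\<close> this projection maps \<open>A\<close> onto \<open>\<phi>\<close>. An isometry between two decompositions
  preserves \<open>A\<close> and therefore descends to an isometry of the anisotropic parts. If \<open>V\<close> is metabolic
  via \<open>U\<close>, then \<open>A \<subseteq> U\<^sup>o\<^sup>o = U\<close>, so \<open>q\<close> vanishes on \<open>A\<close>, which forces \<open>\<phi> = 0\<close>.\<close>

section \<open>Coordinate vectors and the pairing\<close>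

lemma vadd_apply: "vadd x y i = x i + y i"
  by (simp add: vadd_def)

lemma smul_apply: "smul c x i = c * x i"
  by (simp add: smul_def)

lemma zvec_apply: "zvec i = 0"
  by (simp add: zvec_def)

lemma unit_vec_apply: "unit_vec j i = (if i = j then 1 else 0)"
  by (simp add: unit_vec_def)

lemma first_part_apply: "first_part n x i = (if i < n then x i else 0)"
  by (simp add: first_part_def)

lemma second_part_apply: "second_part n x i = x (i + n)"
  by (simp add: second_part_def)

definition vsub :: "'a::ring_1 vec \<Rightarrow> 'a vec \<Rightarrow> 'a vec" where
  "vsub x y = vadd x (smul (-1) y)"

lemma vsub_apply: "vsub x y i = x i - y i"
  by (simp add: vsub_def vadd_def smul_def)

text \<open>These are deliberately not simp rules: with them the simplifier would rewrite vectors such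
  as \<open>vadd x y\<close> into \<open>\<lambda>\<close>-abstractions, after which the lemmas below no longer match.\<close>
lemmas vec_apply_simps = vadd_apply smul_apply zvec_apply vsub_apply first_part_apply
  second_part_apply

lemma vsub_eq_zvec_iff: "vsub x y = zvec \<longleftrightarrow> x = y"
  by (simp add: vec_apply_simps fun_eq_iff)

lemma vadd_in_vecs [intro]: "x \<in> vecs n \<Longrightarrow> y \<in> vecs n \<Longrightarrow> vadd x (y::'a::field vec) \<in> vecs n"
  by (simp add: vecs_def vadd_apply)

lemma smul_in_vecs [intro]: "x \<in> vecs n \<Longrightarrow> smul c (x::'a::field vec) \<in> vecs n"
  by (simp add: vecs_def smul_apply)

lemma vsub_in_vecs [intro]: "x \<in> vecs n \<Longrightarrow> y \<in> vecs n \<Longrightarrow> vsub x (y::'a::field vec) \<in> vecs n"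
  by (simp add: vecs_def vsub_apply)

lemma zvec_in_vecs [simp, intro]: "zvec \<in> vecs n"
  by (simp add: vecs_def zvec_apply)

lemma unit_vec_in_vecs [intro]: "j < n \<Longrightarrow> unit_vec j \<in> vecs n"
  by (simp add: vecs_def unit_vec_def)

lemma first_part_in_vecs [simp, intro]: "first_part n x \<in> vecs n"
  by (simp add: vecs_def first_part_apply)

lemma second_part_in_vecs: "x \<in> vecs (n + k) \<Longrightarrow> second_part n x \<in> vecs k"
  by (simp add: vecs_def second_part_apply)

lemma vecs_mono: "x \<in> vecs m \<Longrightarrow> m \<le> n \<Longrightarrow> x \<in> vecs n"
  by (simp add: vecs_def)

lemma vecs_SucD: "x \<in> vecs (Suc n) \<Longrightarrow> x n = 0 \<Longrightarrow> x \<in> vecs n"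
  by (auto simp: vecs_def) (metis Suc_leI le_neq_implies_less)

lemma first_part_of_vecs: "x \<in> vecs n \<Longrightarrow> first_part n x = x"
  by (auto simp: vec_apply_simps vecs_def fun_eq_iff)

lemma second_part_of_vecs: "x \<in> vecs n \<Longrightarrow> second_part n x = zvec"
  by (simp add: vec_apply_simps vecs_def fun_eq_iff)

lemma vecs_eqI:
  assumes "x \<in> vecs n" "y \<in> vecs n" "\<And>i. i < n \<Longrightarrow> x i = y i"
  shows "x = y"
  using assms by (auto simp: vecs_def fun_eq_iff) (metis not_less)

lemma vecs_0: "x \<in> vecs 0 \<Longrightarrow> x = zvec"
  by (simp add: vecs_def zvec_apply fun_eq_iff)

lemma unit_vec_neq_zvec: "unit_vec j \<noteq> (zvec :: 'a::zero_neq_one vec)"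
  by (auto simp: zvec_apply fun_eq_iff unit_vec_apply)

lemma nonzero_coordinate:
  assumes "x \<in> vecs n" "x \<noteq> zvec"
  obtains k where "k < n" "x k \<noteq> 0"
  using vecs_eqI[OF assms(1) zvec_in_vecs] assms(2) by (auto simp: vec_apply_simps)

lemma first_part_0: "first_part 0 (x::'a::field vec) = zvec"
  by (simp add: vec_apply_simps fun_eq_iff)

lemma first_part_Suc:
  "first_part (Suc m) (x::'a::field vec) = vadd (first_part m x) (smul (x m) (unit_vec m))"
  by (auto simp: vec_apply_simps fun_eq_iff unit_vec_apply less_Suc_eq)

lemma first_part_vadd:
  "first_part n (vadd x (y::'a::field vec)) = vadd (first_part n x) (first_part n y)"
  by (simp add: vec_apply_simps fun_eq_iff)

lemma first_part_smul: "first_part n (smul c (x::'a::field vec)) = smul c (first_part n x)"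
  by (simp add: vec_apply_simps fun_eq_iff)

lemma first_part_vsub:
  "first_part n (vsub x (y::'a::field vec)) = vsub (first_part n x) (first_part n y)"
  by (simp add: vec_apply_simps fun_eq_iff)

lemma second_part_vadd: "second_part n (vadd x y) = vadd (second_part n x) (second_part n y)"
  by (simp add: vec_apply_simps fun_eq_iff)

lemma second_part_smul: "second_part n (smul c x) = smul c (second_part n x)"
  by (simp add: vec_apply_simps fun_eq_iff)

lemma pairing_vadd_left: "pairing n (vadd f g) x = pairing n f x + pairing n g x"
  by (simp add: pairing_def vadd_apply distrib_right sum.distrib)

lemma pairing_vadd_right: "pairing n f (vadd x y) = pairing n f x + pairing n f y"
  by (simp add: pairing_def vadd_apply distrib_left sum.distrib)

lemma pairing_smul_left: "pairing n (smul c f) x = c * pairing n f x"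
  by (simp add: pairing_def smul_apply sum_distrib_left algebra_simps)

lemma pairing_smul_right: "pairing n f (smul c x) = c * pairing n f x"
  by (simp add: pairing_def smul_apply sum_distrib_left algebra_simps)

lemma pairing_vsub_left: "pairing n (vsub f g) x = pairing n f x - pairing n g (x::'a::field vec)"
  by (simp add: vec_apply_simps pairing_def left_diff_distrib sum_subtractf)

lemma pairing_vsub_right: "pairing n f (vsub x y) = pairing n f x - pairing n f (y::'a::field vec)"
  by (simp add: pairing_def vec_apply_simps right_diff_distrib sum_subtractf)

lemma pairing_zvec_left [simp]: "pairing n zvec x = 0"
  by (simp add: pairing_def zvec_apply)

lemma pairing_zvec_right [simp]: "pairing n f zvec = 0"
  by (simp add: pairing_def zvec_apply)

lemma pairing_commute: "pairing n f x = pairing n x f"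
  by (simp add: pairing_def mult.commute)

lemma pairing_Suc: "pairing (Suc n) f x = pairing n f x + f n * x n"
  by (simp add: pairing_def)

lemma pairing_unit_vec_right: "j < n \<Longrightarrow> pairing n f (unit_vec j) = f j"
  by (simp add: pairing_def unit_vec_apply if_distrib cong: if_cong)

lemma pairing_unit_vec_left: "j < n \<Longrightarrow> pairing n (unit_vec j) x = x j"
  by (simp add: pairing_commute pairing_unit_vec_right)

lemma pairing_first_part_right: "pairing n f (first_part n x) = pairing n f x"
  by (simp add: pairing_def first_part_apply)

lemma pairing_of_vecs:
  assumes "f \<in> vecs m" "m \<le> n"
  shows "pairing n f x = pairing m f x"
proof -
  have "{..<n} = {..<m} \<union> {m..<n}" "{..<m} \<inter> {m..<n} = {}"
    using assms(2) by auto
  moreover have "(\<Sum>i\<in>{m..<n}. f i * x i) = 0"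
    using assms(1) by (simp add: vecs_def)
  ultimately show ?thesis
    by (simp add: pairing_def sum.union_disjoint)
qed

section \<open>Totally singular forms and linear maps\<close>

lemma totally_singular_add:
  "totally_singular n Q \<Longrightarrow> x \<in> vecs n \<Longrightarrow> y \<in> vecs n \<Longrightarrow> Q (vadd x y) = Q x + Q y"
  by (simp add: totally_singular_def)

lemma totally_singular_smul:
  "totally_singular n Q \<Longrightarrow> x \<in> vecs n \<Longrightarrow> Q (smul c x) = c ^ 2 * Q x"
  by (simp add: totally_singular_def)

lemma totally_singular_zvec:
  assumes "totally_singular n Q"
  shows "Q zvec = 0"
  using totally_singular_smul[OF assms zvec_in_vecs, of 0] by (simp add: smul_def zvec_def)

text \<open>Since \<open>Q (x + x) = 2 Q x = 4 Q x\<close>, a totally singular form takes values with \<open>2 Q x = 0\<close>;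
  hence it is also additive on differences, in every characteristic.\<close>
lemma totally_singular_vsub:
  assumes Q: "totally_singular n Q" and x: "x \<in> vecs n" and y: "y \<in> vecs n"
  shows "Q (vsub x y) = Q x - Q y"
proof -
  have "Q y + Q y = Q (vadd y y)"
    by (rule totally_singular_add[OF Q y y, symmetric])
  also have "vadd y y = smul 2 y"
    by (simp add: vec_apply_simps fun_eq_iff)
  also have "Q (smul 2 y) = 2 ^ 2 * Q y"
    by (rule totally_singular_smul[OF Q y])
  finally have "Q y = - Q y"
    by algebra
  moreover have "Q (vsub x y) = Q x + (-1) ^ 2 * Q y"
    unfolding vsub_def
    by (simp only: totally_singular_add[OF Q x smul_in_vecs[OF y]] totally_singular_smul[OF Q y])
  ultimately show ?thesis
    by simp
qed

lemma totally_singular_mono: "totally_singular n Q \<Longrightarrow> m \<le> n \<Longrightarrow> totally_singular m Q"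
  unfolding totally_singular_def by (meson vecs_mono)

lemma totally_singular_first_part_expansion:
  assumes Q: "totally_singular n Q" and "m \<le> n"
  shows "Q (first_part m x) = (\<Sum>j<m. (x j)^2 * Q (unit_vec j))"
  using \<open>m \<le> n\<close>
proof (induction m)
  case 0
  show ?case
    unfolding first_part_0 totally_singular_zvec[OF Q] by simp
next
  case (Suc m)
  have x: "first_part m x \<in> vecs n" and e: "unit_vec m \<in> vecs n"
    using Suc.prems by (auto intro: vecs_mono)
  have "Q (first_part (Suc m) x) = Q (first_part m x) + (x m)^2 * Q (unit_vec m)"
    unfolding first_part_Suc totally_singular_add[OF Q x smul_in_vecs[OF e]]
      totally_singular_smul[OF Q e] ..
  with Suc show ?case
    by simp
qed

lemma totally_singular_expansion:
  "totally_singular n Q \<Longrightarrow> x \<in> vecs n \<Longrightarrow> Q x = (\<Sum>j<n. (x j)^2 * Q (unit_vec j))"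
  using totally_singular_first_part_expansion[of n Q n x] by (simp add: first_part_of_vecs)

lemma totally_singular_orth_sum:
  assumes Q: "totally_singular n1 Q" and R: "totally_singular n2 R"
  shows "totally_singular (n1 + n2) (\<lambda>x. Q (first_part n1 x) + R (second_part n1 x))"
  unfolding totally_singular_def
proof (intro conjI ballI allI)
  fix c and x :: "'a vec"
  assume "x \<in> vecs (n1 + n2)"
  then show "Q (first_part n1 (smul c x)) + R (second_part n1 (smul c x)) =
      c ^ 2 * (Q (first_part n1 x) + R (second_part n1 x))"
    unfolding first_part_smul second_part_smul
    by (simp add: totally_singular_smul[OF Q] totally_singular_smul[OF R] second_part_in_vecs
        distrib_left)
next
  fix x y :: "'a vec"
  assume "x \<in> vecs (n1 + n2)" "y \<in> vecs (n1 + n2)"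
  then show "Q (first_part n1 (vadd x y)) + R (second_part n1 (vadd x y)) =
      Q (first_part n1 x) + R (second_part n1 x) + (Q (first_part n1 y) + R (second_part n1 y))"
    unfolding first_part_vadd second_part_vadd
    by (simp add: totally_singular_add[OF Q] totally_singular_add[OF R] second_part_in_vecs
        algebra_simps)
qed

definition zero_set :: "nat \<Rightarrow> ('a::field vec \<Rightarrow> 'a) \<Rightarrow> 'a vec set" where
  "zero_set n Q = {x \<in> vecs n. Q x = 0}"

lemma subspace_zero_set: "totally_singular n Q \<Longrightarrow> subspace_of n (zero_set n Q)"
  by (auto simp: subspace_of_def zero_set_def totally_singular_add totally_singular_smul
      totally_singular_zvec)

lemma linear_on_vadd:
  "linear_on n L \<Longrightarrow> x \<in> vecs n \<Longrightarrow> y \<in> vecs n \<Longrightarrow> L (vadd x y) = vadd (L x) (L y)"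
  by (simp add: linear_on_def)

lemma linear_on_smul: "linear_on n L \<Longrightarrow> x \<in> vecs n \<Longrightarrow> L (smul c x) = smul c (L x)"
  by (simp add: linear_on_def)

lemma linear_on_vsub:
  "linear_on n L \<Longrightarrow> x \<in> vecs n \<Longrightarrow> y \<in> vecs n \<Longrightarrow> L (vsub x y) = vsub (L x) (L y)"
  unfolding vsub_def by (simp add: linear_on_vadd linear_on_smul smul_in_vecs)

lemma linear_on_zvec:
  assumes "linear_on n L"
  shows "L zvec = zvec"
  using linear_on_smul[OF assms zvec_in_vecs, of 0] by (simp add: smul_def zvec_def)

lemma linear_on_comp:
  "linear_on n1 L1 \<Longrightarrow> linear_on n2 L2 \<Longrightarrow> L1 ` vecs n1 \<subseteq> vecs n2 \<Longrightarrow> linear_on n1 (L2 \<circ> L1)"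
  by (auto simp: linear_on_def image_subset_iff)

lemma subspace_ofD:
  assumes "subspace_of n W"
  shows "W \<subseteq> vecs n" "zvec \<in> W" "\<And>x y. x \<in> W \<Longrightarrow> y \<in> W \<Longrightarrow> vadd x y \<in> W"
    "\<And>c x. x \<in> W \<Longrightarrow> smul c x \<in> W"
  using assms by (auto simp: subspace_of_def)

lemma subspace_of_vsub: "subspace_of n W \<Longrightarrow> x \<in> W \<Longrightarrow> y \<in> W \<Longrightarrow> vsub x y \<in> W"
  unfolding vsub_def by (blast dest: subspace_ofD)

lemma subspace_of_image:
  assumes U: "subspace_of n U" and L: "linear_on n L"
    and into: "\<And>x. x \<in> vecs n \<Longrightarrow> L x \<in> vecs m"
  shows "subspace_of m (L ` U)"
proof -
  note U = subspace_ofD[OF U]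
  have "L zvec \<in> L ` U"
    using U(2) by blast
  then have "zvec \<in> L ` U"
    by (simp add: linear_on_zvec[OF L])
  moreover have "vadd (L x) (L y) \<in> L ` U" if "x \<in> U" "y \<in> U" for x y
    using that U(1,3) linear_on_vadd[OF L] by (metis image_eqI subsetD)
  moreover have "smul c (L x) \<in> L ` U" if "x \<in> U" for c x
    using that U(1,4) linear_on_smul[OF L] by (metis image_eqI subsetD)
  ultimately show ?thesis
    unfolding subspace_of_def using U(1) into by blast
qed

lemma linear_on_first_part: "linear_on n (first_part d :: 'a::field vec \<Rightarrow> 'a vec)"
  by (simp add: linear_on_def first_part_vadd first_part_smul)

lemma dual_map_in_vecs [simp, intro]: "dual_map n1 n2 L g \<in> vecs n1"
  by (simp add: dual_map_def vecs_def)

lemma dual_map_apply: "j < n1 \<Longrightarrow> dual_map n1 n2 L g j = pairing n2 g (L (unit_vec j))"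
  by (simp add: dual_map_def)

lemma dual_map_vadd:
  "dual_map n1 n2 L (vadd g h) = vadd (dual_map n1 n2 L g) (dual_map n1 n2 L h)"
  by (simp add: dual_map_def vec_apply_simps fun_eq_iff pairing_vadd_left)

lemma dual_map_smul: "dual_map n1 n2 L (smul c g) = smul c (dual_map n1 n2 L g)"
  by (simp add: dual_map_def vec_apply_simps fun_eq_iff pairing_smul_left)

lemma pairing_linear_first_part:
  assumes L: "linear_on n1 L" and "m \<le> n1"
  shows "pairing n2 g (L (first_part m x)) = (\<Sum>j<m. x j * pairing n2 g (L (unit_vec j)))"
  using \<open>m \<le> n1\<close>
proof (induction m)
  case 0
  show ?case
    unfolding first_part_0 linear_on_zvec[OF L] by simp
next
  case (Suc m)
  have x: "first_part m x \<in> vecs n1" and e: "unit_vec m \<in> vecs n1"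
    using Suc.prems by (auto intro: vecs_mono)
  have "pairing n2 g (L (first_part (Suc m) x)) =
      pairing n2 g (L (first_part m x)) + x m * pairing n2 g (L (unit_vec m))"
    unfolding first_part_Suc linear_on_vadd[OF L x smul_in_vecs[OF e]] linear_on_smul[OF L e]
      pairing_vadd_right pairing_smul_right ..
  with Suc show ?case
    by simp
qed

lemma pairing_dual_map:
  assumes "linear_on n1 L" "x \<in> vecs n1"
  shows "pairing n2 g (L x) = pairing n1 (dual_map n1 n2 L g) x"
  using pairing_linear_first_part[OF assms(1) order_refl, of n2 g x] assms(2)
  by (simp add: first_part_of_vecs pairing_def dual_map_def mult.commute)

lemma dual_map_id: "g \<in> vecs n \<Longrightarrow> dual_map n n id g = g"
  by (rule vecs_eqI[OF dual_map_in_vecs]) (auto simp: dual_map_apply pairing_unit_vec_right)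

lemma dual_map_comp:
  assumes L2: "linear_on n2 L2" and L1: "L1 ` vecs n1 \<subseteq> vecs n2"
  shows "dual_map n1 n3 (L2 \<circ> L1) g = dual_map n1 n2 L1 (dual_map n2 n3 L2 g)"
proof (rule vecs_eqI[OF dual_map_in_vecs dual_map_in_vecs])
  fix j
  assume "j < n1"
  then have "L1 (unit_vec j) \<in> vecs n2"
    using L1 by blast
  with \<open>j < n1\<close> show "dual_map n1 n3 (L2 \<circ> L1) g j = dual_map n1 n2 L1 (dual_map n2 n3 L2 g) j"
    by (simp add: dual_map_apply pairing_dual_map[OF L2])
qed

lemma dual_map_cong:
  assumes "\<And>x. x \<in> vecs n1 \<Longrightarrow> L x = (L' x :: 'a::field vec)"
  shows "dual_map n1 n2 L = dual_map n1 n2 L'"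
  unfolding dual_map_def by (intro ext) (simp add: assms unit_vec_in_vecs)

lemma linear_on_inv_into:
  fixes L :: "'a::field vec \<Rightarrow> 'a vec"
  assumes L: "linear_on n1 L" and bij: "bij_betw L (vecs n1) (vecs n2)"
  shows "linear_on n2 (inv_into (vecs n1) L)"
proof -
  let ?M = "inv_into (vecs n1) L"
  have inv_in: "?M y \<in> vecs n1" if "y \<in> vecs n2" for y
    using that bij by (metis bij_betw_imp_surj_on inv_into_into)
  have L_inv: "L (?M y) = y" if "y \<in> vecs n2" for y
    using that bij by (simp add: bij_betw_inv_into_right)
  have inv_L: "?M (L x) = x" if "x \<in> vecs n1" for x
    using that bij by (simp add: bij_betw_inv_into_left)
  show ?thesis
    unfolding linear_on_def
  proof (intro conjI ballI allI)
    fix y z :: "'a vec"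
    assume "y \<in> vecs n2" "z \<in> vecs n2"
    then have "vadd y z = L (vadd (?M y) (?M z))"
      using linear_on_vadd[OF L inv_in inv_in] L_inv by simp
    then show "?M (vadd y z) = vadd (?M y) (?M z)"
      using inv_L[OF vadd_in_vecs[OF inv_in inv_in]] \<open>y \<in> vecs n2\<close> \<open>z \<in> vecs n2\<close> by simp
  next
    fix c and y :: "'a vec"
    assume "y \<in> vecs n2"
    then have "smul c y = L (smul c (?M y))"
      using linear_on_smul[OF L inv_in] L_inv by simp
    then show "?M (smul c y) = smul c (?M y)"
      using inv_L[OF smul_in_vecs[OF inv_in]] \<open>y \<in> vecs n2\<close> by simp
  qed
qed

section \<open>Isometries and orthogonal sums\<close>

definition isometry ::
    "nat \<Rightarrow> ('a::field vec \<Rightarrow> 'a) \<Rightarrow> ('a vec \<Rightarrow> 'a) \<Rightarrow>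
     nat \<Rightarrow> ('a vec \<Rightarrow> 'a) \<Rightarrow> ('a vec \<Rightarrow> 'a) \<Rightarrow> ('a vec \<Rightarrow> 'a vec) \<Rightarrow> bool" where
  "isometry n1 q1 q1' n2 q2 q2' L \<longleftrightarrow> linear_on n1 L \<and> bij_betw L (vecs n1) (vecs n2) \<and>
     (\<forall>x\<in>vecs n1. q2 (L x) = q1 x) \<and> (\<forall>g\<in>vecs n2. q1' (dual_map n1 n2 L g) = q2' g)"

lemma isometric_iff_isometry:
  "isometric (n1, q1, q1') (n2, q2, q2') \<longleftrightarrow> (\<exists>L. isometry n1 q1 q1' n2 q2 q2' L)"
  by (simp add: isometric_def isometry_def)

lemma isometryD:
  assumes "isometry n1 q1 q1' n2 q2 q2' L"
  shows "linear_on n1 L" "bij_betw L (vecs n1) (vecs n2)" "\<And>x. x \<in> vecs n1 \<Longrightarrow> L x \<in> vecs n2"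
    "\<And>x. x \<in> vecs n1 \<Longrightarrow> q2 (L x) = q1 x"
    "\<And>g. g \<in> vecs n2 \<Longrightarrow> q1' (dual_map n1 n2 L g) = q2' g"
  using assms bij_betwE unfolding isometry_def by blast+

lemma isometry_inv_into:
  assumes L: "isometry n1 q1 q1' n2 q2 q2' L"
  shows "isometry n2 q2 q2' n1 q1 q1' (inv_into (vecs n1) L)"
proof -
  let ?M = "inv_into (vecs n1) L"
  note L = isometryD[OF L]
  have inv_in: "?M y \<in> vecs n1" if "y \<in> vecs n2" for y
    using that L(2) by (metis bij_betw_imp_surj_on inv_into_into)
  have L_inv: "L (?M y) = y" if "y \<in> vecs n2" for y
    using that L(2) by (simp add: bij_betw_inv_into_right)
  have inv_L: "?M (L x) = x" if "x \<in> vecs n1" for x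
    using that L(2) by (simp add: bij_betw_inv_into_left)
  have "q2' (dual_map n2 n1 ?M f) = q1' f" if f: "f \<in> vecs n1" for f
  proof -
    have "dual_map n1 n2 L (dual_map n2 n1 ?M f) = dual_map n1 n1 (?M \<circ> L) f"
      using L(3) by (simp add: dual_map_comp[symmetric] linear_on_inv_into[OF L(1,2)]
          image_subset_iff)
    also have "\<dots> = f"
      using dual_map_cong[of n1 "?M \<circ> L" id n1] inv_L dual_map_id[OF f] by simp
    finally show ?thesis
      using L(5)[of "dual_map n2 n1 ?M f"] by simp
  qed
  moreover have "q1 (?M y) = q2 y" if "y \<in> vecs n2" for y
    using L(4)[OF inv_in[OF that]] L_inv[OF that] by simp
  ultimately show ?thesis
    unfolding isometry_def using linear_on_inv_into[OF L(1,2)] bij_betw_inv_into[OF L(2)] by blast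
qed

lemma isometry_comp:
  assumes L1: "isometry n1 q1 q1' n2 q2 q2' L1" and L2: "isometry n2 q2 q2' n3 q3 q3' L2"
  shows "isometry n1 q1 q1' n3 q3 q3' (L2 \<circ> L1)"
proof -
  note L1 = isometryD[OF L1] and L2 = isometryD[OF L2]
  have img: "L1 ` vecs n1 \<subseteq> vecs n2"
    using L1(3) by blast
  have "q3 ((L2 \<circ> L1) x) = q1 x" if "x \<in> vecs n1" for x
    using that L1(3,4) L2(4) by simp
  moreover have "q1' (dual_map n1 n3 (L2 \<circ> L1) g) = q3' g" if "g \<in> vecs n3" for g
    using that L1(5)[OF dual_map_in_vecs] L2(5) by (simp add: dual_map_comp[OF L2(1) img])
  ultimately show ?thesis
    unfolding isometry_def
    using linear_on_comp[OF L1(1) L2(1) img] bij_betw_trans[OF L1(2) L2(2)] by blast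
qed

lemma isometric_eqI:
  assumes "\<And>x. x \<in> vecs n \<Longrightarrow> q2 x = q1 x" "\<And>g. g \<in> vecs n \<Longrightarrow> q2' g = q1' g"
  shows "isometric (n, q1, q1') (n, q2, q2')"
proof -
  have "isometry n q1 q1' n q2 q2' id"
    unfolding isometry_def linear_on_def by (simp add: assms dual_map_id)
  then show ?thesis
    unfolding isometric_iff_isometry by blast
qed

lemma isometric_refl: "isometric S S"
  by (cases S) (auto intro: isometric_eqI)

lemma isometric_sym:
  assumes "isometric S T"
  shows "isometric T S"
proof -
  obtain n1 q1 q1' n2 q2 q2' where "S = (n1, q1, q1')" "T = (n2, q2, q2')"
    by (cases S, cases T) blast
  with assms isometry_inv_into show ?thesis
    by (simp add: isometric_iff_isometry) blast
qed

lemma isometric_trans: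
  assumes "isometric S T" "isometric T U"
  shows "isometric S U"
proof -
  obtain n1 q1 q1' n2 q2 q2' n3 q3 q3' where
    "S = (n1, q1, q1')" "T = (n2, q2, q2')" "U = (n3, q3, q3')"
    by (cases S, cases T, cases U) blast
  with assms isometry_comp show ?thesis
    by (simp add: isometric_iff_isometry) blast
qed

lemma orth_sum_Pair:
  "orth_sum (n1, q1, q1') (n2, q2, q2') =
    (n1 + n2, \<lambda>x. q1 (first_part n1 x) + q2 (second_part n1 x),
      \<lambda>f. q1' (first_part n1 f) + q2' (second_part n1 f))"
  by (simp add: orth_sum_def)

definition join :: "nat \<Rightarrow> 'a vec \<Rightarrow> 'a vec \<Rightarrow> 'a vec" where
  "join n a b = (\<lambda>i. if i < n then a i else b (i - n))"

lemma join_in_vecs: "(b::'a::zero vec) \<in> vecs k \<Longrightarrow> join n a b \<in> vecs (n + k)"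
  by (simp add: join_def vecs_def)

lemma first_part_join: "(a::'a::zero vec) \<in> vecs n \<Longrightarrow> first_part n (join n a b) = a"
  by (simp add: join_def vecs_def fun_eq_iff first_part_apply)

lemma second_part_join: "second_part n (join n a b) = b"
  by (simp add: join_def fun_eq_iff second_part_apply)

lemma join_first_part_second_part: "join n (first_part n x) (second_part n x) = (x::'a::zero vec)"
  by (simp add: join_def fun_eq_iff second_part_apply first_part_apply)

lemma join_vadd: "join n (vadd a b) (vadd c d) = vadd (join n a c) (join n b (d::'a::field vec))"
  by (simp add: join_def fun_eq_iff vadd_apply)

lemma join_smul: "join n (smul t a) (smul t c) = smul t (join n a (c::'a::field vec))"
  by (simp add: join_def fun_eq_iff smul_apply)

lemma pairing_join:
  "pairing (n + k) g (join n a b) = pairing n g a + pairing k (second_part n g) (b::'a::field vec)"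
proof (induction k)
  case 0
  show ?case
    by (simp add: pairing_def join_def)
next
  case (Suc k)
  then show ?case
    using pairing_Suc[of "n + k"] by (simp add: pairing_Suc join_def second_part_apply add.commute)
qed

definition orth_sum_map :: "nat \<Rightarrow> nat \<Rightarrow> ('a vec \<Rightarrow> 'a vec) \<Rightarrow> 'a::zero vec \<Rightarrow> 'a vec" where
  "orth_sum_map n1 n2 L x = join n2 (L (first_part n1 x)) (second_part n1 x)"

context
  fixes L :: "'a::field vec \<Rightarrow> 'a vec" and n1 n2 :: nat
  assumes L_into: "\<And>x. x \<in> vecs n1 \<Longrightarrow> L x \<in> vecs n2"
begin

lemma first_part_orth_sum_map: "first_part n2 (orth_sum_map n1 n2 L x) = L (first_part n1 x)"
  by (simp add: orth_sum_map_def first_part_join L_into)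

lemma second_part_orth_sum_map: "second_part n2 (orth_sum_map n1 n2 L x) = second_part n1 x"
  by (simp add: orth_sum_map_def second_part_join)

lemma orth_sum_map_in_vecs: "x \<in> vecs (n1 + k) \<Longrightarrow> orth_sum_map n1 n2 L x \<in> vecs (n2 + k)"
  unfolding orth_sum_map_def by (rule join_in_vecs[OF second_part_in_vecs])

lemma linear_on_orth_sum_map: "linear_on n1 L \<Longrightarrow> linear_on (n1 + k) (orth_sum_map n1 n2 L)"
  by (simp add: linear_on_def orth_sum_map_def first_part_vadd second_part_vadd first_part_smul
      second_part_smul linear_on_vadd linear_on_smul join_vadd join_smul)

lemma dual_map_orth_sum_map:
  assumes lin: "linear_on n1 L" and g: "g \<in> vecs (n2 + k)"
  shows "dual_map (n1 + k) (n2 + k) (orth_sum_map n1 n2 L) g =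
    join n1 (dual_map n1 n2 L (first_part n2 g)) (second_part n2 g)"
proof (rule vecs_eqI[OF dual_map_in_vecs join_in_vecs[OF second_part_in_vecs[OF g]]])
  fix j
  assume j: "j < n1 + k"
  have "dual_map (n1 + k) (n2 + k) (orth_sum_map n1 n2 L) g j =
      pairing n2 g (L (first_part n1 (unit_vec j))) +
      pairing k (second_part n2 g) (second_part n1 (unit_vec j))"
    using j by (simp add: dual_map_apply orth_sum_map_def pairing_join)
  also have "\<dots> = join n1 (dual_map n1 n2 L (first_part n2 g)) (second_part n2 g) j"
  proof (cases "j < n1")
    case True
    then have fp: "first_part n1 (unit_vec j) = unit_vec j"
      and sp: "second_part n1 (unit_vec j) = zvec"
      by (simp_all add: first_part_of_vecs second_part_of_vecs unit_vec_in_vecs)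
    show ?thesis
      using True unfolding fp sp by (simp add: join_def dual_map_apply pairing_commute[of n2 g]
          pairing_commute[of n2 "first_part n2 g"] pairing_first_part_right)
  next
    case False
    then have fp: "first_part n1 (unit_vec j) = zvec"
      and sp: "second_part n1 (unit_vec j) = unit_vec (j - n1)"
      by (auto simp: fun_eq_iff vec_apply_simps unit_vec_apply)
    show ?thesis
      using False j unfolding fp sp
        by (simp add: join_def linear_on_zvec[OF lin] pairing_unit_vec_right second_part_apply)
  qed
  finally show "dual_map (n1 + k) (n2 + k) (orth_sum_map n1 n2 L) g j =
      join n1 (dual_map n1 n2 L (first_part n2 g)) (second_part n2 g) j" .
qed

end

lemma orth_sum_map_inverse:
  assumes "\<And>x. x \<in> vecs n1 \<Longrightarrow> L x \<in> vecs n2" "\<And>x. x \<in> vecs n1 \<Longrightarrow> M (L x) = x"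
  shows "orth_sum_map n2 n1 M (orth_sum_map n1 n2 L x) = (x::'a::field vec)"
  using assms by (simp add: orth_sum_map_def first_part_join second_part_join
      join_first_part_second_part)

lemma isometry_orth_sum_map:
  assumes iso: "isometry n1 q1 q1' n2 q2 q2' L"
  shows "isometry (n1 + k) (\<lambda>x. q1 (first_part n1 x) + r (second_part n1 x))
      (\<lambda>f. q1' (first_part n1 f) + r' (second_part n1 f))
    (n2 + k) (\<lambda>x. q2 (first_part n2 x) + r (second_part n2 x))
      (\<lambda>f. q2' (first_part n2 f) + r' (second_part n2 f)) (orth_sum_map n1 n2 L)"
proof -
  let ?M = "inv_into (vecs n1) L"
  note L = isometryD[OF iso] and M = isometryD[OF isometry_inv_into[OF iso]]
  have inv_L: "?M (L x) = x" if "x \<in> vecs n1" for x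
    using that L(2) by (simp add: bij_betw_inv_into_left)
  have L_inv: "L (?M y) = y" if "y \<in> vecs n2" for y
    using that L(2) by (simp add: bij_betw_inv_into_right)
  have "bij_betw (orth_sum_map n1 n2 L) (vecs (n1 + k)) (vecs (n2 + k))"
    by (rule bij_betw_byWitness[where f' = "orth_sum_map n2 n1 ?M"])
      (auto simp: orth_sum_map_inverse L(3) M(3) inv_L L_inv
        intro: orth_sum_map_in_vecs[OF L(3)] orth_sum_map_in_vecs[OF M(3)])
  then show ?thesis
    unfolding isometry_def
    by (simp add: linear_on_orth_sum_map L(1,3,4) first_part_orth_sum_map second_part_orth_sum_map
        dual_map_orth_sum_map first_part_join second_part_join L(5))
qed

lemma isometric_orth_sum_left:
  assumes "isometric S1 S2"
  shows "isometric (orth_sum S1 T) (orth_sum S2 T)"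
proof -
  obtain n1 q1 q1' n2 q2 q2' k r r' where
    "S1 = (n1, q1, q1')" "S2 = (n2, q2, q2')" "T = (k, r, r')"
    by (cases S1, cases S2, cases T) blast
  with assms isometry_orth_sum_map show ?thesis
    by (simp add: isometric_iff_isometry orth_sum_Pair) blast
qed

section \<open>Existence of the decomposition\<close>

lemma isometric_change_of_basis:
  assumes S: "is_ssqs (n, q, q')" and L: "linear_on n L" and M: "linear_on n M"
    and into: "\<And>x. x \<in> vecs n \<Longrightarrow> L x \<in> vecs n" "\<And>x. x \<in> vecs n \<Longrightarrow> M x \<in> vecs n"
    and inv: "\<And>x. x \<in> vecs n \<Longrightarrow> L (M x) = x" "\<And>x. x \<in> vecs n \<Longrightarrow> M (L x) = x"
  shows "is_ssqs (n, q \<circ> L, q' \<circ> dual_map n n M)"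
    and "isometric (n, q, q') (n, q \<circ> L, q' \<circ> dual_map n n M)"
proof -
  have q: "totally_singular n q" and q': "totally_singular n q'"
    using S by (auto simp: is_ssqs_def)
  have "totally_singular n (q \<circ> L)"
    unfolding totally_singular_def
    by (simp add: linear_on_vadd[OF L] linear_on_smul[OF L] into(1)
        totally_singular_add[OF q] totally_singular_smul[OF q])
  moreover have "totally_singular n (q' \<circ> dual_map n n M)"
    unfolding totally_singular_def
    by (simp add: dual_map_vadd dual_map_smul totally_singular_add[OF q']
        totally_singular_smul[OF q'])
  ultimately show "is_ssqs (n, q \<circ> L, q' \<circ> dual_map n n M)"
    by (simp add: is_ssqs_def)
  have "bij_betw M (vecs n) (vecs n)"
    by (rule bij_betw_byWitness[where f' = L]) (use into inv in auto)
  then have "isometry n q q' n (q \<circ> L) (q' \<circ> dual_map n n M) M"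
    unfolding isometry_def using M inv by simp
  then show "isometric (n, q, q') (n, q \<circ> L, q' \<circ> dual_map n n M)"
    unfolding isometric_iff_isometry by blast
qed

definition swap_coordinates :: "nat \<Rightarrow> nat \<Rightarrow> 'a vec \<Rightarrow> 'a vec" where
  "swap_coordinates k m z = z \<circ> transpose k m"

lemma swap_coordinates_involutive: "swap_coordinates k m (swap_coordinates k m z) = z"
  by (simp add: swap_coordinates_def comp_assoc)

lemma swap_coordinates_in_vecs:
  "k < n \<Longrightarrow> m < n \<Longrightarrow> z \<in> vecs n \<Longrightarrow> swap_coordinates k m (z::'a::zero vec) \<in> vecs n"
  by (simp add: swap_coordinates_def vecs_def transpose_def)

lemma linear_on_swap_coordinates: "linear_on n (swap_coordinates k m :: 'a::field vec \<Rightarrow> 'a vec)"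
  by (simp add: linear_on_def swap_coordinates_def fun_eq_iff vadd_apply smul_apply)

lemma pairing_swap_coordinates:
  assumes "k < n" "m < n"
  shows "pairing n (swap_coordinates k m a) (swap_coordinates k m b) =
    pairing n a (b::'a::field vec)"
proof -
  have "bij_betw (transpose k m) {..<n} {..<n}"
    using assms by (simp add: bij_betw_transpose_iff)
  then show ?thesis
    unfolding pairing_def swap_coordinates_def comp_def
    by (rule sum.reindex_bij_betw[where h = "transpose k m" and g = "\<lambda>i. a i * b i"])
qed

lemma dual_map_swap_coordinates:
  assumes "k < n" "m < n" "x \<in> vecs n"
  shows "dual_map n n (swap_coordinates k m) (swap_coordinates k m x) = (x::'a::field vec)"
proof (rule vecs_eqI[OF dual_map_in_vecs \<open>x \<in> vecs n\<close>])
  fix j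
  assume "j < n"
  have "pairing n (swap_coordinates k m x) (swap_coordinates k m (unit_vec j)) =
      pairing n x (unit_vec j)"
    by (rule pairing_swap_coordinates[OF assms(1,2)])
  with \<open>j < n\<close> show "dual_map n n (swap_coordinates k m) (swap_coordinates k m x) j = x j"
    by (simp add: dual_map_apply pairing_unit_vec_right)
qed

definition line_vec :: "nat \<Rightarrow> 'a::field vec \<Rightarrow> 'a vec" where
  "line_vec m z = smul (z 0) (unit_vec m)"

lemma line_vec_in_vecs: "m < n \<Longrightarrow> line_vec m z \<in> vecs n"
  unfolding line_vec_def by (intro smul_in_vecs unit_vec_in_vecs)

lemma totally_singular_line:
  assumes Q: "totally_singular n Q" and "m < n"
  shows "totally_singular 1 (Q \<circ> line_vec m)"
proof -
  have smul: "line_vec m (smul c z) = smul c (line_vec m z)"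
    and vadd: "line_vec m (vadd z w) = vadd (line_vec m z) (line_vec m w)" for c z w
    by (simp_all add: line_vec_def fun_eq_iff vec_apply_simps algebra_simps)
  show ?thesis
    unfolding totally_singular_def
    by (simp add: smul vadd totally_singular_add[OF Q] totally_singular_smul[OF Q]
        line_vec_in_vecs[OF \<open>m < n\<close>])
qed

lemma totally_singular_line_apply:
  assumes "totally_singular n Q" "m < n"
  shows "Q (line_vec m z) = (z 0)^2 * Q (unit_vec m)"
  unfolding line_vec_def by (rule totally_singular_smul[OF assms(1) unit_vec_in_vecs[OF assms(2)]])

lemma metabolic_lineI:
  assumes r: "totally_singular 1 r" and r': "totally_singular 1 r'"
    and "r (unit_vec 0) = 0 \<or> r' (unit_vec 0) = 0"
  shows "metabolic (1, r, r')"
  using \<open>r (unit_vec 0) = 0 \<or> r' (unit_vec 0) = 0\<close>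
proof
  assume r0: "r (unit_vec 0) = 0"
  have "subspace_of 1 (vecs 1)"
    by (auto simp: subspace_of_def)
  moreover have "r x = 0" if "x \<in> vecs 1" for x
    using totally_singular_expansion[OF r that] r0 by simp
  moreover have "r' f = 0" if "f \<in> annihilator 1 (vecs 1)" for f
  proof -
    have "f 0 = pairing 1 f (unit_vec 0)"
      by (simp add: pairing_unit_vec_right)
    also have "\<dots> = 0"
      using that unit_vec_in_vecs[of 0 1] by (auto simp: annihilator_def)
    finally show ?thesis
      using totally_singular_expansion[of 1 r' f] r' that by (simp add: annihilator_def)
  qed
  ultimately show ?thesis
    unfolding metabolic_def by auto
next
  assume r0': "r' (unit_vec 0) = 0"
  have "subspace_of 1 {zvec}"
    by (auto simp: subspace_of_def fun_eq_iff vec_apply_simps)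
  moreover have "r' f = 0" if "f \<in> vecs 1" for f
    using totally_singular_expansion[OF r' that] r0' by simp
  ultimately show ?thesis
    unfolding metabolic_def annihilator_def using totally_singular_zvec[OF r] by auto
qed

lemma metabolic_lineD:
  assumes "metabolic (1, r, r')"
  shows "r (unit_vec 0) = 0 \<or> r' (unit_vec 0) = 0"
proof -
  obtain U where U: "subspace_of 1 U" "\<And>x. x \<in> U \<Longrightarrow> r x = 0"
    "\<And>f. f \<in> annihilator 1 U \<Longrightarrow> r' f = 0"
    using assms by (auto simp: metabolic_def)
  show ?thesis
  proof (cases "\<exists>x\<in>U. x 0 \<noteq> 0")
    case True
    then obtain x where x: "x \<in> U" "x 0 \<noteq> 0"
      by blast
    have "smul (1 / x 0) x = unit_vec 0"
      using x U(1) by (intro vecs_eqI) (auto simp: subspace_of_def smul_apply unit_vec_apply)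
    moreover have "smul (1 / x 0) x \<in> U"
      using x U(1) by (simp add: subspace_of_def)
    ultimately show ?thesis
      using U(2) by metis
  next
    case False
    then have "unit_vec 0 \<in> annihilator 1 U"
      by (auto simp: annihilator_def pairing_unit_vec_left unit_vec_in_vecs)
    then show ?thesis
      using U(3) by blast
  qed
qed

lemma isometric_orth_sum_last_line:
  assumes S: "is_ssqs (Suc m, q, q')"
  shows "isometric (Suc m, q, q') (orth_sum (m, q, q') (1, q \<circ> line_vec m, q' \<circ> line_vec m))"
proof -
  have split: "Q x = Q (first_part m x) + (Q \<circ> line_vec m) (second_part m x)"
    if Q: "totally_singular (Suc m) Q" and x: "x \<in> vecs (Suc m)" for Q x
  proof -
    have "x = vadd (first_part m x) (line_vec m (second_part m x))"
      using first_part_Suc[of m x] first_part_of_vecs[OF x]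
      by (simp add: line_vec_def second_part_apply)
    then show ?thesis
      using totally_singular_add[OF Q vecs_mono[OF first_part_in_vecs] line_vec_in_vecs]
      by (metis comp_apply le_SucI order_refl lessI)
  qed
  have q: "totally_singular (Suc m) q" and q': "totally_singular (Suc m) q'"
    using S by (auto simp: is_ssqs_def)
  have "orth_sum (m, q, q') (1, q \<circ> line_vec m, q' \<circ> line_vec m) =
      (Suc m, \<lambda>x. q (first_part m x) + (q \<circ> line_vec m) (second_part m x),
        \<lambda>f. q' (first_part m f) + (q' \<circ> line_vec m) (second_part m f))"
    by (simp add: orth_sum_Pair)
  then show ?thesis
    using split[OF q] split[OF q'] by (simp add: isometric_eqI)
qed

lemma split_off_metabolic_line:
  assumes S: "is_ssqs (Suc m, q, q')" and e: "q (unit_vec m) = 0 \<or> q' (unit_vec m) = 0"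
  obtains S' \<mu> where "is_ssqs S'" "dim S' = m" "is_ssqs \<mu>" "dim \<mu> = 1" "metabolic \<mu>"
    "isometric (Suc m, q, q') (orth_sum S' \<mu>)"
proof -
  have q: "totally_singular (Suc m) q" and q': "totally_singular (Suc m) q'"
    using S by (auto simp: is_ssqs_def)
  have r: "totally_singular 1 (q \<circ> line_vec m)" and r': "totally_singular 1 (q' \<circ> line_vec m)"
    using totally_singular_line[OF q] totally_singular_line[OF q'] by simp_all
  have "(q \<circ> line_vec m) (unit_vec 0) = q (unit_vec m)"
    "(q' \<circ> line_vec m) (unit_vec 0) = q' (unit_vec m)"
    by (simp_all add: totally_singular_line_apply[OF q] totally_singular_line_apply[OF q']
        unit_vec_apply)
  with e have "metabolic (1, q \<circ> line_vec m, q' \<circ> line_vec m)"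
    by (intro metabolic_lineI[OF r r']) simp
  moreover have "is_ssqs (m, q, q')"
    using q q' by (simp add: is_ssqs_def totally_singular_mono)
  moreover have "is_ssqs (1, q \<circ> line_vec m, q' \<circ> line_vec m)"
    using r r' by (simp add: is_ssqs_def)
  ultimately show ?thesis
    using that isometric_orth_sum_last_line[OF S] by (simp add: dim_def)
qed

text \<open>A \<open>q\<close>-isotropic vector \<open>y\<close> with \<open>y\<^sub>m \<noteq> 0\<close> becomes the last basis vector under
  \<open>e\<^sub>j \<mapsto> e\<^sub>j (j < m)\<close>, \<open>e\<^sub>m \<mapsto> y\<close>.\<close>
lemma isometric_isotropic_last_vector:
  assumes S: "is_ssqs (Suc m, q, q')"
    and y: "y \<in> vecs (Suc m)" "y m \<noteq> 0" "q y = (0::'a::field)"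
  obtains r r' where "is_ssqs (Suc m, r, r')" "isometric (Suc m, q, q') (Suc m, r, r')"
    "r (unit_vec m) = 0"
proof -
  define L :: "'a vec \<Rightarrow> 'a vec" where "L z = vadd (first_part m z) (smul (z m) y)" for z
  define M :: "'a vec \<Rightarrow> 'a vec" where
    "M w = vadd (first_part m w) (smul (w m / y m) (vsub (unit_vec m) (first_part m y)))" for w
  have lin_L: "linear_on (Suc m) L"
    unfolding linear_on_def L_def by (simp add: fun_eq_iff vec_apply_simps algebra_simps)
  have lin_M: "linear_on (Suc m) M"
    unfolding linear_on_def M_def
    by (simp add: fun_eq_iff vec_apply_simps add_divide_distrib distrib_left distrib_right
        mult.assoc times_divide_eq_right)
  have L_in: "L z \<in> vecs (Suc m)" for z
    unfolding L_def by (intro vadd_in_vecs smul_in_vecs y(1) vecs_mono[OF first_part_in_vecs]) simp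
  have M_in: "M z \<in> vecs (Suc m)" for z
    unfolding M_def by (intro vadd_in_vecs smul_in_vecs vsub_in_vecs unit_vec_in_vecs
        vecs_mono[OF first_part_in_vecs]) simp_all
  have L_M: "L (M w) = w" if "w \<in> vecs (Suc m)" for w
  proof (rule vecs_eqI[OF L_in that])
    fix j
    assume "j < Suc m"
    then show "L (M w) j = w j"
      using y(2) by (cases "j = m") (auto simp: L_def M_def vec_apply_simps unit_vec_apply
          field_simps)
  qed
  have M_L: "M (L z) = z" if "z \<in> vecs (Suc m)" for z
  proof (rule vecs_eqI[OF M_in that])
    fix j
    assume "j < Suc m"
    then show "M (L z) j = z j"
      using y(2) by (cases "j = m") (auto simp: L_def M_def vec_apply_simps unit_vec_apply
          field_simps)
  qed
  note basis_change = isometric_change_of_basis[OF S lin_L lin_M L_in M_in L_M M_L]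
  have "L (unit_vec m) = y"
    by (simp add: L_def fun_eq_iff vec_apply_simps unit_vec_apply)
  with basis_change show ?thesis
    using that y(3) by simp
qed

text \<open>Dually, a \<open>q'\<close>-isotropic covector \<open>g\<close> with \<open>g\<^sub>m \<noteq> 0\<close> becomes the last dual basis
  vector under \<open>M y = (y\<^sub>0, \<dots>, y\<^sub>m\<^sub>-\<^sub>1, \<langle>g, y\<rangle>)\<close>.\<close>
lemma isometric_isotropic_last_covector:
  assumes S: "is_ssqs (Suc m, q, q')"
    and g: "g \<in> vecs (Suc m)" "g m \<noteq> 0" "q' g = (0::'a::field)"
  obtains r r' where "is_ssqs (Suc m, r, r')" "isometric (Suc m, q, q') (Suc m, r, r')"
    "r' (unit_vec m) = 0"
proof -
  define M :: "'a vec \<Rightarrow> 'a vec" where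
    "M y = vadd (first_part m y) (smul (pairing (Suc m) g y) (unit_vec m))" for y
  define L :: "'a vec \<Rightarrow> 'a vec" where
    "L z = vadd (first_part m z) (smul ((z m - pairing m g z) / g m) (unit_vec m))" for z
  have g_e: "pairing m g (unit_vec m) = 0"
    by (simp add: pairing_def unit_vec_apply)
  have lin_L: "linear_on (Suc m) L"
    unfolding linear_on_def L_def
    by (simp add: fun_eq_iff vec_apply_simps pairing_vadd_right pairing_smul_right algebra_simps
        add_divide_distrib diff_divide_distrib)
  have lin_M: "linear_on (Suc m) M"
    unfolding linear_on_def M_def
    by (simp add: fun_eq_iff vec_apply_simps pairing_vadd_right pairing_smul_right algebra_simps)
  have L_in: "L z \<in> vecs (Suc m)" for z
    unfolding L_def by (intro vadd_in_vecs smul_in_vecs unit_vec_in_vecs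
        vecs_mono[OF first_part_in_vecs]) simp_all
  have M_in: "M z \<in> vecs (Suc m)" for z
    unfolding M_def by (intro vadd_in_vecs smul_in_vecs unit_vec_in_vecs
        vecs_mono[OF first_part_in_vecs]) simp_all
  have pL: "pairing m g (L z) = pairing m g z" and pM: "pairing m g (M z) = pairing m g z" for z
    unfolding L_def M_def pairing_vadd_right pairing_smul_right pairing_first_part_right g_e
    by simp_all
  have L_M: "L (M w) = w" if "w \<in> vecs (Suc m)" for w
  proof (rule vecs_eqI[OF L_in that])
    fix j
    assume "j < Suc m"
    have "L (M w) m = (pairing (Suc m) g w - pairing m g w) / g m"
      using pM by (simp add: L_def M_def vec_apply_simps unit_vec_apply)
    also have "\<dots> = w m"
      using g(2) by (simp add: pairing_Suc)
    finally show "L (M w) j = w j"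
      using \<open>j < Suc m\<close>
        by (cases "j = m") (simp_all add: L_def M_def vec_apply_simps unit_vec_apply)
  qed
  have M_L: "M (L z) = z" if "z \<in> vecs (Suc m)" for z
  proof (rule vecs_eqI[OF M_in that])
    fix j
    assume "j < Suc m"
    have "M (L z) m = pairing m g z + g m * ((z m - pairing m g z) / g m)"
      using pL by (simp add: L_def M_def vec_apply_simps unit_vec_apply pairing_Suc)
    also have "\<dots> = z m"
      using g(2) by simp
    finally show "M (L z) j = z j"
      using \<open>j < Suc m\<close>
        by (cases "j = m") (simp_all add: L_def M_def vec_apply_simps unit_vec_apply)
  qed
  note basis_change = isometric_change_of_basis[OF S lin_L lin_M L_in M_in L_M M_L]
  have "dual_map (Suc m) (Suc m) M (unit_vec m) = g"
  proof (rule vecs_eqI[OF dual_map_in_vecs g(1)])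
    fix j
    assume "j < Suc m"
    then show "dual_map (Suc m) (Suc m) M (unit_vec m) j = g j"
      by (simp add: dual_map_apply pairing_unit_vec_left M_def vec_apply_simps unit_vec_apply
          pairing_unit_vec_right)
  qed
  with basis_change show ?thesis
    using that g(3) by simp
qed

lemma isotropic_split_metabolic_line:
  assumes S: "is_ssqs (n, q, q')" and "isotropic (n, q, q')"
  obtains S' \<mu> where "is_ssqs S'" "dim S' < n" "is_ssqs \<mu>" "dim \<mu> = 1" "metabolic \<mu>"
    "isometric (n, q, q') (orth_sum S' \<mu>)"
proof -
  have "\<exists>x\<in>vecs n. x \<noteq> zvec \<and> (q x = 0 \<or> q' x = 0)"
    using \<open>isotropic (n, q, q')\<close> by (auto simp: isotropic_def)
  then obtain x k where x: "x \<in> vecs n" "k < n" "x k \<noteq> 0" "q x = 0 \<or> q' x = 0"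
    using nonzero_coordinate by metis
  then obtain m where n: "n = Suc m"
    by (cases n) auto
  let ?P = "swap_coordinates k m"
  have P_in: "\<And>z. z \<in> vecs n \<Longrightarrow> ?P z \<in> vecs n"
    using swap_coordinates_in_vecs[OF x(2), of m] n by simp
  note swap = isometric_change_of_basis[OF S linear_on_swap_coordinates linear_on_swap_coordinates
      P_in P_in swap_coordinates_involutive swap_coordinates_involutive]
  have y: "?P x \<in> vecs (Suc m)" "?P x m \<noteq> 0"
    using P_in[OF x(1)] x(3) n by (simp_all add: swap_coordinates_def)
  have S_swap: "is_ssqs (Suc m, q \<circ> ?P, q' \<circ> dual_map n n ?P)"
    using swap(1) n by simp
  obtain r r' where T: "is_ssqs (Suc m, r, r')"
    "isometric (Suc m, q \<circ> ?P, q' \<circ> dual_map n n ?P) (Suc m, r, r')"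
    "r (unit_vec m) = 0 \<or> r' (unit_vec m) = 0"
    using x(4)
  proof
    assume "q x = 0"
    then have "(q \<circ> ?P) (?P x) = 0"
      by (simp add: swap_coordinates_involutive)
    then show ?thesis
      using isometric_isotropic_last_vector[OF S_swap y] that by blast
  next
    assume "q' x = 0"
    then have "(q' \<circ> dual_map n n ?P) (?P x) = 0"
      using dual_map_swap_coordinates[OF x(2) _ x(1)] n by simp
    then show ?thesis
      using isometric_isotropic_last_covector[OF S_swap y] that by blast
  qed
  obtain S' \<mu> where "is_ssqs S'" "dim S' = m" "is_ssqs \<mu>" "dim \<mu> = 1" "metabolic \<mu>"
    and "isometric (Suc m, r, r') (orth_sum S' \<mu>)"
    by (rule split_off_metabolic_line[OF T(1,3)])
  moreover have "isometric (n, q, q') (Suc m, r, r')"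
    using isometric_trans[OF swap(2)] T(2) n by simp
  ultimately show ?thesis
    using that isometric_trans n by blast
qed

lemma orth_sum_list_Nil [simp]: "orth_sum_list S [] = S"
  by (simp add: orth_sum_list_def)

lemma orth_sum_list_snoc: "orth_sum_list S (ms @ [\<mu>]) = orth_sum (orth_sum_list S ms) \<mu>"
  by (simp add: orth_sum_list_def)

lemma decomposition_exists:
  assumes "is_ssqs S"
  shows "\<exists>\<phi> ms. is_ssqs \<phi> \<and> anisotropic \<phi> \<and> (\<forall>m\<in>set ms. is_ssqs m \<and> dim m = 1 \<and> metabolic m) \<and>
    isometric S (orth_sum_list \<phi> ms)"
  using assms
proof (induction "dim S" arbitrary: S rule: less_induct)
  case less
  obtain n q q' where S: "S = (n, q, q')"
    by (cases S) auto
  show ?case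
  proof (cases "anisotropic S")
    case True
    with less.prems isometric_refl[of S] show ?thesis
      by (intro exI[of _ S] exI[of _ "[]"]) simp
  next
    case False
    then have "isotropic (n, q, q')"
      using S by (simp add: anisotropic_def)
    then obtain S' \<mu> where split: "is_ssqs S'" "dim S' < n" "is_ssqs \<mu>" "dim \<mu> = 1" "metabolic \<mu>"
      "isometric S (orth_sum S' \<mu>)"
      using isotropic_split_metabolic_line less.prems S by blast
    then obtain \<phi> ms where IH: "is_ssqs \<phi>" "anisotropic \<phi>"
      "\<forall>m\<in>set ms. is_ssqs m \<and> dim m = 1 \<and> metabolic m" "isometric S' (orth_sum_list \<phi> ms)"
      using less.hyps[of S'] S by (auto simp: dim_def)
    have "isometric S (orth_sum_list \<phi> (ms @ [\<mu>]))"
      unfolding orth_sum_list_snoc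
      using isometric_trans[OF split(6) isometric_orth_sum_left[OF IH(4)]] .
    moreover have "\<forall>m\<in>set (ms @ [\<mu>]). is_ssqs m \<and> dim m = 1 \<and> metabolic m"
      using IH(3) split(3-5) by auto
    ultimately show ?thesis
      using IH(1,2) by blast
  qed
qed

section \<open>Annihilators\<close>

lemma annihilatorI: "f \<in> vecs n \<Longrightarrow> (\<And>x. x \<in> U \<Longrightarrow> pairing n f x = 0) \<Longrightarrow> f \<in> annihilator n U"
  by (simp add: annihilator_def)

lemma annihilatorD: "f \<in> annihilator n U \<Longrightarrow> x \<in> U \<Longrightarrow> pairing n f x = 0"
  by (simp add: annihilator_def)

lemma annihilator_subset_vecs: "annihilator n U \<subseteq> vecs n"
  by (auto simp: annihilator_def)

lemma subspace_annihilator: "subspace_of n (annihilator n (W::'a::field vec set))"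
  by (auto simp: subspace_of_def annihilator_def pairing_vadd_left pairing_smul_left)

lemma annihilator_antimono: "U \<subseteq> W \<Longrightarrow> annihilator n W \<subseteq> annihilator n U"
  by (auto simp: annihilator_def)

text \<open>If \<open>w\<^sub>0 \<in> W\<close> has last coordinate \<open>1\<close>, a functional on \<open>F\<^sup>n\<close> killing \<open>W \<inter> F\<^sup>n\<close> extends to
  one on \<open>F\<^sup>n\<^sup>+\<^sup>1\<close> killing \<open>W\<close>, by evaluating it on \<open>y - y\<^sub>n w\<^sub>0\<close>.\<close>
lemma annihilator_extend_Suc:
  assumes W: "subspace_of (Suc n) W" and w0: "w0 \<in> W" "w0 n = 1"
    and f': "f' \<in> annihilator n (W \<inter> vecs n)"
  defines "f \<equiv> vsub f' (smul (pairing n f' w0) (unit_vec n))"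
  shows "f \<in> annihilator (Suc n) W"
    and "\<And>y. pairing (Suc n) f y = pairing n f' (vsub y (smul (y n) w0))"
proof -
  have f'_in: "f' \<in> vecs n"
    using f' annihilator_subset_vecs by blast
  show pairing_f: "pairing (Suc n) f y = pairing n f' (vsub y (smul (y n) w0))" for y
  proof -
    have "pairing (Suc n) f y = pairing (Suc n) f' y - pairing n f' w0 * y n"
      by (simp add: f_def pairing_vsub_left pairing_smul_left pairing_unit_vec_left)
    also have "\<dots> = pairing n f' (vsub y (smul (y n) w0))"
      by (simp add: pairing_of_vecs[OF f'_in, of "Suc n"] pairing_vsub_right pairing_smul_right
          mult.commute)
    finally show ?thesis .
  qed
  show "f \<in> annihilator (Suc n) W"
  proof (rule annihilatorI)
    show "f \<in> vecs (Suc n)"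
      unfolding f_def using vecs_mono[OF f'_in]
        by (intro vsub_in_vecs smul_in_vecs unit_vec_in_vecs) auto
  next
    fix y
    assume y: "y \<in> W"
    have "vsub y (smul (y n) w0) \<in> W"
      using subspace_of_vsub[OF W y subspace_ofD(4)[OF W w0(1)]] .
    moreover have "vsub y (smul (y n) w0) \<in> vecs n"
    proof (rule vecs_SucD)
      show "vsub y (smul (y n) w0) \<in> vecs (Suc n)"
        using subspace_ofD(1)[OF W] y w0(1) by (intro vsub_in_vecs smul_in_vecs) blast+
      show "vsub y (smul (y n) w0) n = 0"
        using w0(2) by (simp add: vec_apply_simps)
    qed
    ultimately show "pairing (Suc n) f y = 0"
      using f' by (simp add: pairing_f annihilatorD)
  qed
qed

lemma annihilator_separates:
  assumes "subspace_of n W" "x \<in> vecs n" "x \<notin> W"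
  shows "\<exists>f\<in>annihilator n W. pairing n f (x::'a::field vec) \<noteq> 0"
  using assms
proof (induction n arbitrary: W x)
  case 0
  then show ?case
    using vecs_0 by (fastforce simp: subspace_of_def)
next
  case (Suc n)
  have W: "W \<subseteq> vecs (Suc n)" "\<And>c w. w \<in> W \<Longrightarrow> smul c w \<in> W"
    using Suc.prems(1) by (auto simp: subspace_of_def)
  show ?case
  proof (cases "\<exists>w\<in>W. w n \<noteq> 0")
    case True
    then obtain w where w: "w \<in> W" "w n \<noteq> 0"
      by blast
    define w0 where "w0 = smul (1 / w n) w"
    have w0: "w0 \<in> W" "w0 n = 1"
      using W(2) w by (simp_all add: w0_def smul_apply)
    have sub: "subspace_of n (W \<inter> vecs n)"
      using Suc.prems(1) by (auto simp: subspace_of_def)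
    let ?x = "vsub x (smul (x n) w0)"
    have "?x \<in> vecs n"
    proof (rule vecs_SucD)
      show "?x \<in> vecs (Suc n)"
        using Suc.prems(2) W(1) w0(1) by (intro vsub_in_vecs smul_in_vecs) blast+
      show "?x n = 0"
        using w0(2) by (simp add: vec_apply_simps)
    qed
    moreover have "?x \<notin> W"
    proof
      assume "?x \<in> W"
      then have "vadd ?x (smul (x n) w0) \<in> W"
        using Suc.prems(1) W(2)[OF w0(1)] by (simp add: subspace_of_def)
      moreover have "vadd ?x (smul (x n) w0) = x"
        by (simp add: fun_eq_iff vec_apply_simps)
      ultimately show False
        using Suc.prems(3) by simp
    qed
    ultimately obtain f' where f': "f' \<in> annihilator n (W \<inter> vecs n)" "pairing n f' ?x \<noteq> 0"
      using Suc.IH[OF sub] by blast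
    note extend = annihilator_extend_Suc[OF Suc.prems(1) w0 f'(1)]
    show ?thesis
    proof (rule bexI[OF _ extend(1)])
      show "pairing (Suc n) (vsub f' (smul (pairing n f' w0) (unit_vec n))) x \<noteq> 0"
        using extend(2)[of x] f'(2) by simp
    qed
  next
    case False
    show ?thesis
    proof (cases "x n = 0")
      case False
      have "unit_vec n \<in> annihilator (Suc n) W"
        using \<open>\<not> (\<exists>w\<in>W. w n \<noteq> 0)\<close> by (auto intro!: annihilatorI simp: pairing_unit_vec_left)
      moreover have "pairing (Suc n) (unit_vec n) x \<noteq> 0"
        using False by (simp add: pairing_unit_vec_left)
      ultimately show ?thesis
        by blast
    next
      case True
      have "w \<in> vecs n" if "w \<in> W" for w
        using that W(1) \<open>\<not> (\<exists>w\<in>W. w n \<noteq> 0)\<close> vecs_SucD[of w n] by blast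
      then have "subspace_of n W"
        using Suc.prems(1) by (auto simp: subspace_of_def)
      then obtain f where f: "f \<in> annihilator n W" "pairing n f x \<noteq> 0"
        using Suc.IH vecs_SucD[OF Suc.prems(2) True] Suc.prems(3) by blast
      have f_in: "f \<in> vecs n"
        using f(1) annihilator_subset_vecs by blast
      have pairing_f: "pairing (Suc n) f y = pairing n f y" for y
        using pairing_of_vecs[OF f_in, of "Suc n"] by simp
      have "f \<in> annihilator (Suc n) W"
        using f(1) vecs_mono[OF f_in] by (auto simp: annihilator_def pairing_f)
      moreover have "pairing (Suc n) f x \<noteq> 0"
        using f(2) by (simp add: pairing_f)
      ultimately show ?thesis
        by blast
    qed
  qed
qed

lemma annihilator_annihilator_subset:
  assumes "subspace_of n W"
  shows "annihilator n (annihilator n W) \<subseteq> (W::'a::field vec set)"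
proof
  fix x
  assume x: "x \<in> annihilator n (annihilator n W)"
  show "x \<in> W"
  proof (rule ccontr)
    assume "x \<notin> W"
    then obtain f where f: "f \<in> annihilator n W" "pairing n f x \<noteq> 0"
      using annihilator_separates[OF assms] x annihilator_subset_vecs by blast
    have "pairing n x f = 0"
      by (rule annihilatorD[OF x f(1)])
    with f(2) show False
      by (simp add: pairing_commute)
  qed
qed

lemma isometry_annihilator_zero_set:
  assumes iso: "isometry n1 q1 q1' n2 q2 q2' \<psi>" and u: "u \<in> annihilator n1 (zero_set n1 q1')"
  shows "\<psi> u \<in> annihilator n2 (zero_set n2 q2')"
proof (rule annihilatorI)
  note \<psi> = isometryD[OF iso]
  have u_in: "u \<in> vecs n1"
    using u annihilator_subset_vecs by blast
  then show "\<psi> u \<in> vecs n2"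
    by (rule \<psi>(3))
  fix h
  assume "h \<in> zero_set n2 q2'"
  then have "dual_map n1 n2 \<psi> h \<in> zero_set n1 q1'"
    using \<psi>(5) by (simp add: zero_set_def)
  then have "pairing n1 u (dual_map n1 n2 \<psi> h) = 0"
    by (rule annihilatorD[OF u])
  then show "pairing n2 (\<psi> u) h = 0"
    by (simp add: pairing_commute pairing_dual_map[OF \<psi>(1) u_in])
qed

lemma isometry_metabolic:
  assumes iso: "isometry n1 q1 q1' n2 q2 q2' \<psi>" and "metabolic (n1, q1, q1')"
  shows "metabolic (n2, q2, q2')"
proof -
  note \<psi> = isometryD[OF iso]
  obtain U where U: "subspace_of n1 U" "\<And>x. x \<in> U \<Longrightarrow> q1 x = 0"
    "\<And>f. f \<in> annihilator n1 U \<Longrightarrow> q1' f = 0"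
    using assms(2) by (auto simp: metabolic_def)
  have "q2 y = 0" if "y \<in> \<psi> ` U" for y
    using that U(2) \<psi>(4) subspace_ofD(1)[OF U(1)] by auto
  moreover have "q2' f = 0" if f: "f \<in> annihilator n2 (\<psi> ` U)" for f
  proof -
    have f_in: "f \<in> vecs n2"
      using f annihilator_subset_vecs by blast
    have "pairing n1 (dual_map n1 n2 \<psi> f) x = 0" if "x \<in> U" for x
      using annihilatorD[OF f imageI[OF that]] subspace_ofD(1)[OF U(1)] that
        pairing_dual_map[OF \<psi>(1), of x n2 f] by auto
    then have "dual_map n1 n2 \<psi> f \<in> annihilator n1 U"
      by (intro annihilatorI) auto
    then show ?thesis
      using U(3) \<psi>(5)[OF f_in] by simp
  qed
  ultimately show ?thesis
    unfolding metabolic_def using subspace_of_image[OF U(1) \<psi>(1,3)] by auto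
qed

lemma metabolic_isometric: "isometric S T \<Longrightarrow> metabolic S \<Longrightarrow> metabolic T"
  by (cases S, cases T) (auto simp: isometric_iff_isometry intro: isometry_metabolic)

section \<open>Uniqueness of the anisotropic part\<close>

text \<open>The coordinate shape of \<open>(d, p, p') \<perp> \<mu>\<^sub>1 \<perp> \<dots> \<perp> \<mu>\<^sub>k\<close> with one-dimensional metabolic \<open>\<mu>\<^sub>i\<close>.\<close>
locale metabolic_extension =
  fixes d n :: nat and p p' q q' :: "'a::field vec \<Rightarrow> 'a"
  assumes d_le_n: "d \<le> n"
    and totally_singular_q: "totally_singular n q" and totally_singular_q': "totally_singular n q'"
    and q_restrict: "\<And>x. x \<in> vecs d \<Longrightarrow> q x = p x"
    and q'_restrict: "\<And>f. f \<in> vecs d \<Longrightarrow> q' f = p' f"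
    and metabolic_coordinate: "\<And>i. d \<le> i \<Longrightarrow> i < n \<Longrightarrow> q (unit_vec i) = 0 \<or> q' (unit_vec i) = 0"
begin

abbreviation singular_annihilator :: "'a vec set" where
  "singular_annihilator \<equiv> annihilator n (zero_set n q')"

lemma form_on_annihilator:
  assumes u: "u \<in> singular_annihilator"
  shows "q u = p (first_part d u)"
proof -
  have u_in: "u \<in> vecs n"
    using u annihilator_subset_vecs by blast
  define r where "r = vsub u (first_part d u)"
  have fp_in: "first_part d u \<in> vecs n" and r_in: "r \<in> vecs n"
    using vecs_mono[OF first_part_in_vecs d_le_n] u_in by (auto simp: r_def)
  have "r j = 0 \<or> q (unit_vec j) = 0" if "j < n" for j
  proof (cases "j < d")
    case True
    then show ?thesis
      by (simp add: r_def vec_apply_simps)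
  next
    case False
    then have "q (unit_vec j) = 0 \<or> q' (unit_vec j) = 0"
      using metabolic_coordinate \<open>j < n\<close> by simp
    then consider "q (unit_vec j) = 0" | "q' (unit_vec j) = 0"
      by blast
    then show ?thesis
    proof cases
      case 2
      then have "unit_vec j \<in> zero_set n q'"
        using \<open>j < n\<close> by (simp add: zero_set_def unit_vec_in_vecs)
      then have "u j = 0"
        using annihilatorD[OF u] pairing_unit_vec_right[OF \<open>j < n\<close>] by (metis pairing_commute)
      with False show ?thesis
        by (simp add: r_def vec_apply_simps)
    qed simp
  qed
  then have "q r = 0"
    using totally_singular_expansion[OF totally_singular_q r_in] by (auto intro!: sum.neutral)
  moreover have "u = vadd (first_part d u) r"
    by (simp add: r_def fun_eq_iff vec_apply_simps)
  then have "q u = q (first_part d u) + q r"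
    using totally_singular_add[OF totally_singular_q fp_in r_in] by simp
  ultimately show ?thesis
    by (simp add: q_restrict)
qed

lemma first_part_annihilator_onto:
  assumes aniso: "anisotropic (d, p, p')" and x: "x \<in> vecs d"
  shows "\<exists>u\<in>singular_annihilator. first_part d u = x"
proof (rule ccontr)
  let ?I = "first_part d ` singular_annihilator"
  assume "\<not> (\<exists>u\<in>singular_annihilator. first_part d u = x)"
  then have "x \<notin> ?I"
    by blast
  moreover have "subspace_of d ?I"
    by (rule subspace_of_image[OF subspace_annihilator linear_on_first_part]) simp
  ultimately obtain h where h: "h \<in> annihilator d ?I" "pairing d h x \<noteq> 0"
    using annihilator_separates x by blast
  have h_in: "h \<in> vecs d"
    using h(1) annihilator_subset_vecs by blast
  have "pairing n h u = 0" if "u \<in> singular_annihilator" for u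
  proof -
    have "pairing n h u = pairing d h (first_part d u)"
      using pairing_of_vecs[OF h_in d_le_n] by (simp add: pairing_first_part_right)
    also have "\<dots> = 0"
      using h(1) that by (blast intro: annihilatorD)
    finally show ?thesis .
  qed
  then have "h \<in> annihilator n singular_annihilator"
    using vecs_mono[OF h_in d_le_n] by (intro annihilatorI)
  then have "h \<in> zero_set n q'"
    using annihilator_annihilator_subset[OF subspace_zero_set[OF totally_singular_q']] by blast
  then have "p' h = 0"
    using q'_restrict[OF h_in] by (simp add: zero_set_def)
  then have "h = zvec"
    using aniso h_in by (auto simp: anisotropic_def isotropic_def)
  with h(2) show False
    by simp
qed

lemma dim_eq_0_if_metabolic:
  assumes aniso: "anisotropic (d, p, p')" and "metabolic (n, q, q')"
  shows "d = 0"
proof (rule ccontr)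
  assume "d \<noteq> 0"
  then have e: "unit_vec 0 \<in> vecs d"
    by (simp add: unit_vec_in_vecs)
  obtain U where U: "subspace_of n U" "\<And>x. x \<in> U \<Longrightarrow> q x = 0"
    "\<And>f. f \<in> annihilator n U \<Longrightarrow> q' f = 0"
    using assms(2) by (auto simp: metabolic_def)
  have "annihilator n U \<subseteq> zero_set n q'"
    using U(3) annihilator_subset_vecs by (auto simp: zero_set_def)
  then have "singular_annihilator \<subseteq> U"
    using annihilator_antimono annihilator_annihilator_subset[OF U(1)] by blast
  obtain u where u: "u \<in> singular_annihilator" "first_part d u = unit_vec 0"
    using first_part_annihilator_onto[OF aniso e] by blast
  have "p (unit_vec 0) = 0"
    using form_on_annihilator[OF u(1)] U(2) \<open>singular_annihilator \<subseteq> U\<close> u by auto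
  then have "unit_vec 0 = (zvec :: 'a vec)"
    using aniso e by (auto simp: anisotropic_def isotropic_def)
  then show False
    using unit_vec_neq_zvec by blast
qed

end

lemma metabolic_extension_refl:
  "is_ssqs (d, p, p') \<Longrightarrow> metabolic_extension d d p p' p p'"
  by (unfold_locales) (auto simp: is_ssqs_def)

lemma metabolic_extension_orth_sum:
  assumes E: "metabolic_extension d n p p' q q'" and r: "is_ssqs (1, r, r')" "metabolic (1, r, r')"
  shows "metabolic_extension d (n + 1) p p'
    (\<lambda>x. q (first_part n x) + r (second_part n x)) (\<lambda>f. q' (first_part n f) + r' (second_part n f))"
proof -
  interpret metabolic_extension d n p p' q q'
    by (rule E)
  have r_ts: "totally_singular 1 r" "totally_singular 1 r'"
    using r(1) by (auto simp: is_ssqs_def)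
  have small: "first_part n x = x" "second_part n x = zvec" if "x \<in> vecs n" for x :: "'a vec"
    using that by (simp_all add: first_part_of_vecs second_part_of_vecs)
  have last: "first_part n (unit_vec n) = (zvec :: 'a vec)"
    "second_part n (unit_vec n) = (unit_vec 0 :: 'a vec)"
    by (simp_all add: fun_eq_iff vec_apply_simps unit_vec_apply)
  have zero: "q zvec = 0" "q' zvec = 0" "r zvec = 0" "r' zvec = 0"
    using totally_singular_zvec totally_singular_q totally_singular_q' r_ts by blast+
  show ?thesis
  proof
    show "d \<le> n + 1"
      using d_le_n by simp
    show "totally_singular (n + 1) (\<lambda>x. q (first_part n x) + r (second_part n x))"
      by (rule totally_singular_orth_sum[OF totally_singular_q r_ts(1)])
    show "totally_singular (n + 1) (\<lambda>f. q' (first_part n f) + r' (second_part n f))"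
      by (rule totally_singular_orth_sum[OF totally_singular_q' r_ts(2)])
  next
    fix x :: "'a vec"
    assume "x \<in> vecs d"
    with vecs_mono[OF this d_le_n] show "q (first_part n x) + r (second_part n x) = p x"
      and "q' (first_part n x) + r' (second_part n x) = p' x"
      using small zero q_restrict q'_restrict by simp_all
  next
    fix i
    assume i: "d \<le> i" "i < n + 1"
    show "q (first_part n (unit_vec i)) + r (second_part n (unit_vec i)) = 0 \<or>
        q' (first_part n (unit_vec i)) + r' (second_part n (unit_vec i)) = 0"
    proof (cases "i < n")
      case True
      then show ?thesis
        using metabolic_coordinate[OF i(1)] small[OF unit_vec_in_vecs[OF True]] zero by simp
    next
      case False
      then have "i = n"
        using i by simp
      then show ?thesis
        using metabolic_lineD[OF r(2)] last zero by simp
    qed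
  qed
qed

lemma orth_sum_list_metabolic_extension:
  assumes "is_ssqs (d, p, p')" "\<forall>m\<in>set ms. is_ssqs m \<and> dim m = 1 \<and> metabolic m"
  shows "\<exists>n q q'. orth_sum_list (d, p, p') ms = (n, q, q') \<and> metabolic_extension d n p p' q q'"
  using assms(2)
proof (induction ms rule: rev_induct)
  case Nil
  then show ?case
    using metabolic_extension_refl[OF assms(1)] by simp
next
  case (snoc m ms)
  then obtain n q q' where ms: "orth_sum_list (d, p, p') ms = (n, q, q')"
    "metabolic_extension d n p p' q q'"
    by auto
  obtain r r' where m: "m = (1, r, r')" "is_ssqs (1, r, r')" "metabolic (1, r, r')"
    using snoc.prems by (cases m) (auto simp: dim_def)
  show ?case
    using metabolic_extension_orth_sum[OF ms(2) m(2,3)]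
    by (simp add: orth_sum_list_snoc ms(1) m(1) orth_sum_Pair)
qed

locale isometric_metabolic_extensions =
  E1: metabolic_extension d1 n1 p1 p1' q1 q1' + E2: metabolic_extension d2 n2 p2 p2' q2 q2'
  for d1 n1 :: nat and p1 p1' q1 q1' :: "'a::field vec \<Rightarrow> 'a"
    and d2 n2 :: nat and p2 p2' q2 q2' :: "'a vec \<Rightarrow> 'a" +
  fixes \<psi> :: "'a vec \<Rightarrow> 'a vec"
  assumes isometry: "isometry n1 q1 q1' n2 q2 q2' \<psi>"
    and anisotropic1: "anisotropic (d1, p1, p1')" and anisotropic2: "anisotropic (d2, p2, p2')"
begin

lemmas \<psi> = isometryD[OF isometry]

lemma psi_annihilator: "u \<in> E1.singular_annihilator \<Longrightarrow> \<psi> u \<in> E2.singular_annihilator"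
  by (rule isometry_annihilator_zero_set[OF isometry])

lemma annihilator_in_vecs1: "u \<in> E1.singular_annihilator \<Longrightarrow> u \<in> vecs n1"
  using annihilator_subset_vecs by blast

lemma p1_zvec: "p1 zvec = 0" and p2_zvec: "p2 zvec = 0"
  using E1.q_restrict[OF zvec_in_vecs] totally_singular_zvec[OF E1.totally_singular_q]
    E2.q_restrict[OF zvec_in_vecs] totally_singular_zvec[OF E2.totally_singular_q] by simp_all

lemma first_part_psi_eq_zvec:
  assumes u: "u \<in> E1.singular_annihilator" and "first_part d1 u = zvec"
  shows "first_part d2 (\<psi> u) = zvec"
proof -
  have "p2 (first_part d2 (\<psi> u)) = q2 (\<psi> u)"
    using E2.form_on_annihilator[OF psi_annihilator[OF u]] by simp
  also have "\<dots> = q1 u"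
    using \<psi>(4)[OF annihilator_in_vecs1[OF u]] .
  also have "\<dots> = 0"
    using E1.form_on_annihilator[OF u] \<open>first_part d1 u = zvec\<close> p1_zvec by simp
  finally show ?thesis
    using anisotropic2 by (auto simp: anisotropic_def isotropic_def)
qed

definition theta :: "'a vec \<Rightarrow> 'a vec" where
  "theta x = first_part d2 (\<psi> (SOME u. u \<in> E1.singular_annihilator \<and> first_part d1 u = x))"

lemma theta_first_part:
  assumes u: "u \<in> E1.singular_annihilator"
  shows "theta (first_part d1 u) = first_part d2 (\<psi> u)"
proof -
  define v where "v = (SOME v. v \<in> E1.singular_annihilator \<and> first_part d1 v = first_part d1 u)"
  have v: "v \<in> E1.singular_annihilator" "first_part d1 v = first_part d1 u"
    using someI_ex[of "\<lambda>v. v \<in> E1.singular_annihilator \<and> first_part d1 v = first_part d1 u"]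
      u by (auto simp: v_def)
  have "vsub v u \<in> E1.singular_annihilator"
    using subspace_of_vsub[OF subspace_annihilator v(1) u] .
  moreover have "first_part d1 (vsub v u) = zvec"
    using v(2) by (simp add: first_part_vsub vsub_eq_zvec_iff)
  ultimately have "first_part d2 (\<psi> (vsub v u)) = zvec"
    by (rule first_part_psi_eq_zvec)
  then have "first_part d2 (\<psi> v) = first_part d2 (\<psi> u)"
    using annihilator_in_vecs1 u v(1)
    by (simp add: linear_on_vsub[OF \<psi>(1)] first_part_vsub vsub_eq_zvec_iff)
  then show ?thesis
    by (simp add: theta_def v_def)
qed

lemma first_part_onto1: "x \<in> vecs d1 \<Longrightarrow> \<exists>u\<in>E1.singular_annihilator. first_part d1 u = x"
  by (rule E1.first_part_annihilator_onto[OF anisotropic1])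

lemma linear_theta: "linear_on d1 theta"
  unfolding linear_on_def
proof (intro conjI ballI allI)
  fix x y :: "'a vec"
  assume "x \<in> vecs d1" "y \<in> vecs d1"
  then obtain u v where u: "u \<in> E1.singular_annihilator" "first_part d1 u = x"
    and v: "v \<in> E1.singular_annihilator" "first_part d1 v = y"
    using first_part_onto1 by blast
  have "vadd u v \<in> E1.singular_annihilator"
    using subspace_ofD(3)[OF subspace_annihilator u(1) v(1)] .
  then show "theta (vadd x y) = vadd (theta x) (theta y)"
    using theta_first_part[of "vadd u v"] theta_first_part[OF u(1)] theta_first_part[OF v(1)]
      annihilator_in_vecs1 u v
    by (simp add: first_part_vadd linear_on_vadd[OF \<psi>(1)])
next
  fix c and x :: "'a vec"
  assume "x \<in> vecs d1"
  then obtain u where u: "u \<in> E1.singular_annihilator" "first_part d1 u = x"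
    using first_part_onto1 by blast
  have "smul c u \<in> E1.singular_annihilator"
    using subspace_ofD(4)[OF subspace_annihilator u(1)] .
  then show "theta (smul c x) = smul c (theta x)"
    using theta_first_part[of "smul c u"] theta_first_part[OF u(1)] annihilator_in_vecs1 u
    by (simp add: first_part_smul linear_on_smul[OF \<psi>(1)])
qed

lemma theta_form:
  assumes "x \<in> vecs d1"
  shows "p2 (theta x) = p1 x"
proof -
  obtain u where u: "u \<in> E1.singular_annihilator" "first_part d1 u = x"
    using first_part_onto1[OF assms] by blast
  have "p2 (theta x) = q2 (\<psi> u)"
    using E2.form_on_annihilator[OF psi_annihilator[OF u(1)]] theta_first_part[OF u(1)] u(2) by simp
  also have "\<dots> = q1 u"
    using \<psi>(4)[OF annihilator_in_vecs1[OF u(1)]] .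
  also have "\<dots> = p1 x"
    using E1.form_on_annihilator[OF u(1)] u(2) by simp
  finally show ?thesis .
qed

lemma inj_theta: "inj_on theta (vecs d1)"
proof (rule inj_onI)
  fix x y :: "'a vec"
  assume x: "x \<in> vecs d1" and y: "y \<in> vecs d1" and "theta x = theta y"
  then have "theta (vsub x y) = zvec"
    by (simp add: linear_on_vsub[OF linear_theta] vsub_eq_zvec_iff)
  then have "p1 (vsub x y) = 0"
    using theta_form[OF vsub_in_vecs[OF x y]] p2_zvec by simp
  then have "vsub x y = zvec"
    using anisotropic1 vsub_in_vecs[OF x y] by (auto simp: anisotropic_def isotropic_def)
  then show "x = y"
    by (simp add: vsub_eq_zvec_iff)
qed

lemma theta_image: "theta ` vecs d1 = vecs d2"
proof
  show "theta ` vecs d1 \<subseteq> vecs d2"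
    by (auto simp: theta_def)
next
  show "vecs d2 \<subseteq> theta ` vecs d1"
  proof
    fix y :: "'a vec"
    assume "y \<in> vecs d2"
    then obtain u' where u': "u' \<in> E2.singular_annihilator" "first_part d2 u' = y"
      using E2.first_part_annihilator_onto[OF anisotropic2] by blast
    let ?u = "inv_into (vecs n1) \<psi> u'"
    have "?u \<in> E1.singular_annihilator"
      by (rule isometry_annihilator_zero_set[OF isometry_inv_into[OF isometry] u'(1)])
    moreover have "\<psi> ?u = u'"
      using bij_betw_inv_into_right[OF \<psi>(2)] u'(1) annihilator_subset_vecs by blast
    ultimately show "y \<in> theta ` vecs d1"
      using theta_first_part u'(2) by (metis first_part_in_vecs image_eqI)
  qed
qed

lemma theta_dual_form:
  assumes g: "g \<in> vecs d2"
  shows "p1' (dual_map d1 d2 theta g) = p2' g"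
proof -
  define G where "G = dual_map d1 d2 theta g"
  define H where "H = dual_map n1 n2 \<psi> g"
  have G_in: "G \<in> vecs n1" and H_in: "H \<in> vecs n1" and g_in: "g \<in> vecs n2"
    using vecs_mono[OF dual_map_in_vecs E1.d_le_n] vecs_mono[OF g E2.d_le_n]
    by (simp_all add: G_def H_def)
  have "pairing n1 G u = pairing n1 H u" if u: "u \<in> E1.singular_annihilator" for u
  proof -
    have "pairing n1 G u = pairing d1 G (first_part d1 u)"
      using pairing_of_vecs[OF dual_map_in_vecs E1.d_le_n]
      by (simp add: G_def pairing_first_part_right)
    also have "\<dots> = pairing d2 g (theta (first_part d1 u))"
      unfolding G_def by (rule pairing_dual_map[OF linear_theta first_part_in_vecs, symmetric])
    also have "\<dots> = pairing d2 g (\<psi> u)"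
      using theta_first_part[OF u] by (simp add: pairing_first_part_right)
    also have "\<dots> = pairing n2 g (\<psi> u)"
      using pairing_of_vecs[OF g E2.d_le_n] by simp
    also have "\<dots> = pairing n1 H u"
      unfolding H_def by (rule pairing_dual_map[OF \<psi>(1) annihilator_in_vecs1[OF u]])
    finally show ?thesis .
  qed
  then have "vsub G H \<in> annihilator n1 E1.singular_annihilator"
    using G_in H_in by (intro annihilatorI) (auto simp: pairing_vsub_left)
  then have "vsub G H \<in> zero_set n1 q1'"
    using annihilator_annihilator_subset[OF subspace_zero_set[OF E1.totally_singular_q']] by blast
  then have "q1' G = q1' H"
    using totally_singular_vsub[OF E1.totally_singular_q' G_in H_in] by (simp add: zero_set_def)
  then show ?thesis
    using E1.q'_restrict[OF dual_map_in_vecs] \<psi>(5)[OF g_in] E2.q'_restrict[OF g]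
    by (simp add: G_def H_def)
qed

theorem isometric_anisotropic_parts: "isometric (d1, p1, p1') (d2, p2, p2')"
proof -
  have "isometry d1 p1 p1' d2 p2 p2' theta"
    unfolding isometry_def bij_betw_def
    by (simp add: linear_theta inj_theta theta_image theta_form theta_dual_form)
  then show ?thesis
    unfolding isometric_iff_isometry by blast
qed

end

lemma orth_sum_list_decomposition:
  assumes "is_ssqs \<phi>" "\<forall>m\<in>set ms. is_ssqs m \<and> dim m = 1 \<and> metabolic m"
  obtains d p p' n q q' where "\<phi> = (d, p, p')" "orth_sum_list \<phi> ms = (n, q, q')"
    "metabolic_extension d n p p' q q'"
  using orth_sum_list_metabolic_extension assms by (cases \<phi>) blast

lemma anisotropic_part_unique:
  assumes "is_ssqs \<phi>1" "anisotropic \<phi>1" "\<forall>m\<in>set ms1. is_ssqs m \<and> dim m = 1 \<and> metabolic m"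
    and "isometric S (orth_sum_list \<phi>1 ms1)"
    and "is_ssqs \<phi>2" "anisotropic \<phi>2" "\<forall>m\<in>set ms2. is_ssqs m \<and> dim m = 1 \<and> metabolic m"
    and "isometric S (orth_sum_list \<phi>2 ms2)"
  shows "isometric \<phi>1 \<phi>2"
proof -
  obtain d1 p1 p1' n1 q1 q1' where E1: "\<phi>1 = (d1, p1, p1')" "orth_sum_list \<phi>1 ms1 = (n1, q1, q1')"
    "metabolic_extension d1 n1 p1 p1' q1 q1'"
    using orth_sum_list_decomposition[OF assms(1,3)] .
  obtain d2 p2 p2' n2 q2 q2' where E2: "\<phi>2 = (d2, p2, p2')" "orth_sum_list \<phi>2 ms2 = (n2, q2, q2')"
    "metabolic_extension d2 n2 p2 p2' q2 q2'"
    using orth_sum_list_decomposition[OF assms(5,7)] .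
  have "isometric (n1, q1, q1') (n2, q2, q2')"
    using isometric_trans[OF isometric_sym[OF assms(4)] assms(8)] E1(2) E2(2) by simp
  then obtain \<psi> where "isometry n1 q1 q1' n2 q2 q2' \<psi>"
    unfolding isometric_iff_isometry by blast
  with E1 E2 assms(2,6)
  interpret isometric_metabolic_extensions d1 n1 p1 p1' q1 q1' d2 n2 p2 p2' q2 q2' \<psi>
    by (simp add: isometric_metabolic_extensions_def isometric_metabolic_extensions_axioms_def)
  show ?thesis
    using isometric_anisotropic_parts E1(1) E2(1) by simp
qed

lemma anisotropic_part_of_metabolic:
  assumes "metabolic S"
    and "is_ssqs \<phi>" "anisotropic \<phi>" "\<forall>m\<in>set ms. is_ssqs m \<and> dim m = 1 \<and> metabolic m"
    and "isometric S (orth_sum_list \<phi> ms)"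
  shows "dim \<phi> = 0"
proof -
  obtain d p p' n q q' where E: "\<phi> = (d, p, p')" "orth_sum_list \<phi> ms = (n, q, q')"
    "metabolic_extension d n p p' q q'"
    using orth_sum_list_decomposition[OF assms(2,4)] .
  have "metabolic (n, q, q')"
    using metabolic_isometric[OF assms(5,1)] E(2) by simp
  then show ?thesis
    using metabolic_extension.dim_eq_0_if_metabolic[OF E(3)] assms(3) E(1) by (simp add: dim_def)
qed

theorem proposition2p4:
  assumes "CHAR('a::field) = 2"
  shows
    "\<forall>S :: 'a ssqs. is_ssqs S \<longrightarrow>
       (\<exists>\<phi> ms. is_ssqs \<phi> \<and> anisotropic \<phi> \<and>
          (\<forall>m\<in>set ms. is_ssqs m \<and> dim m = 1 \<and> metabolic m) \<and>
          isometric S (orth_sum_list \<phi> ms)) \<and>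
       (\<forall>\<phi>1 ms1 \<phi>2 ms2.
          is_ssqs \<phi>1 \<and> anisotropic \<phi>1 \<and>
          (\<forall>m\<in>set ms1. is_ssqs m \<and> dim m = 1 \<and> metabolic m) \<and>
          isometric S (orth_sum_list \<phi>1 ms1) \<and>
          is_ssqs \<phi>2 \<and> anisotropic \<phi>2 \<and>
          (\<forall>m\<in>set ms2. is_ssqs m \<and> dim m = 1 \<and> metabolic m) \<and>
          isometric S (orth_sum_list \<phi>2 ms2)
          \<longrightarrow> isometric \<phi>1 \<phi>2) \<and>
       (metabolic S \<longrightarrow>
          (\<forall>\<phi> ms. is_ssqs \<phi> \<and> anisotropic \<phi> \<and>
             (\<forall>m\<in>set ms. is_ssqs m \<and> dim m = 1 \<and> metabolic m) \<and>
             isometric S (orth_sum_list \<phi> ms) \<longrightarrow> dim \<phi> = 0))"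
  by (intro allI impI conjI; (elim conjE)?)
    (blast intro: decomposition_exists anisotropic_part_unique anisotropic_part_of_metabolic)+

end
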